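(* For each alphabet $A$ and each weight $\mathbf a$, the metric tree $\mathbb{T}^{A,\mathbf a}$ is geodesic.
   Context: An alphabet is $A=\mathbb N$ or $A=\{1,\dots,M\}$ with $M\ge2$. $A^k$: words of length $k$ ($A^0=\{\varepsilon\}$), $A^*=\bigcup_kA^k$, $A^{\mathbb N}$: infinite words; for $u\in A^*$, $A^n_u$ and $A^{\mathbb N}_u$ are the words of length $n$, resp. infinite words, beginning with $u$; $w(n)$ is the length-$n$ prefix; $i^{(k)}$ is $k$ copies of $i$. Graphs $G^A_k=(A^k,E^A_k)$: $E^A_1=\{\{1,i\}:i\in A\setminus\{1\}\}$, $E^A_{k+1}=\{\{12^{(k)},i1^{(k)}\}:i\in A\setminus\{1\}\}\cup\{\{iw,iu\}:i\in A,\{w,u\}\in E^A_k\}$. $A^{\mathbb N}_{u_1}\wedge A^{\mathbb N}_{u_2}$ is the set of $w\in A^{\mathbb N}_{u_1}$ such that for every $n>\max\{|u_1|,|u_2|\}$ there is $u\in A^n_{u_2}$ with $\{w(n),u\}\in E^A_n$, together with the symmetric set with $u_1,u_2$ swapped. A chain joining $w,w'\in A^{\mathbb N}$ is a list $A^{\mathbb N}_{v_1},\dots,A^{\mathbb N}_{v_N}$ with $w\in A^{\mathbb N}_{v_1}$, $w'\in A^{\mathbb N}_{v_N}$ and $A^{\mathbb N}_{v_i}\wedge A^{\mathbb N}_{v_{i+1}}\ne\emptyset$. A weight is a non-increasing $\mathbf a:\mathbb N\to(0,1/2]$ with $\mathbf a(1)=\mathbf a(2)=1/2$, $\lim\mathbf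 a(i)=0$; $\Delta_{\mathbf a}(\varepsilon)=1$, $\Delta_{\mathbf a}(i_1\cdots i_k)=\prod\mathbf a(i_j)$. $\rho_{A,\mathbf a}(w,u)=\inf\sum_{i=1}^N\Delta_{\mathbf a}(v_i)$ over chains joining $w$ and $u$; $\mathbb{T}^{A,\mathbf a}$ is the quotient of $A^{\mathbb N}$ by $\rho_{A,\mathbf a}(w,u)=0$ with metric $d_{A,\mathbf a}([w],[u])=\rho_{A,\mathbf a}(w,u)$. Geodesic: any two points $x,y$ are joined by a curve isometric to an interval of length $d(x,y)$. *)

theory Defs
  imports Complex_Main
begin

text \<open>Letters are positive naturals; an alphabet is a set A \<subseteq> {1..}.
  Finite words are lists, infinite words are functions nat \<Rightarrow> nat (index 0 = first letter).\<close>

definition is_alphabet :: "nat set \<Rightarrow> bool" where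
  "is_alphabet A \<longleftrightarrow> A = {1..} \<or> (\<exists>M\<ge>2. A = {1..M})"

definition words :: "nat set \<Rightarrow> nat \<Rightarrow> nat list set" where
  "words A n = {u. length u = n \<and> set u \<subseteq> A}"

definition infwords :: "nat set \<Rightarrow> (nat \<Rightarrow> nat) set" where
  "infwords A = {w. \<forall>i. w i \<in> A}"

definition pref :: "(nat \<Rightarrow> nat) \<Rightarrow> nat \<Rightarrow> nat list" where
  "pref w n = map w [0..<n]"

definition cyl :: "nat set \<Rightarrow> nat list \<Rightarrow> (nat \<Rightarrow> nat) set" where
  "cyl A u = {w \<in> infwords A. pref w (length u) = u}"

fun edges :: "nat set \<Rightarrow> nat \<Rightarrow> nat list set set" where
  "edges A 0 = {}"
| "edges A (Suc k) =
     {{1 # replicate k 2, i # replicate k 1} | i. i \<in> A \<and> i \<noteq> 1}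
     \<union> {{i # w, i # u} | i w u. i \<in> A \<and> {w, u} \<in> edges A k}"

definition wedge_half :: "nat set \<Rightarrow> nat list \<Rightarrow> nat list \<Rightarrow> (nat \<Rightarrow> nat) set" where
  "wedge_half A u1 u2 = {w \<in> cyl A u1. \<forall>n > max (length u1) (length u2).
      \<exists>u \<in> words A n. take (length u2) u = u2 \<and> {pref w n, u} \<in> edges A n}"

definition wedge :: "nat set \<Rightarrow> nat list \<Rightarrow> nat list \<Rightarrow> (nat \<Rightarrow> nat) set" where
  "wedge A u1 u2 = wedge_half A u1 u2 \<union> wedge_half A u2 u1"

definition is_chain :: "nat set \<Rightarrow> (nat \<Rightarrow> nat) \<Rightarrow> (nat \<Rightarrow> nat) \<Rightarrow> nat list list \<Rightarrow> bool" where
  "is_chain A w w' vs \<longleftrightarrow> vs \<noteq> [] \<and> (\<forall>v \<in> set vs. set v \<subseteq> A) \<and>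
     w \<in> cyl A (hd vs) \<and> w' \<in> cyl A (last vs) \<and>
     (\<forall>i. Suc i < length vs \<longrightarrow> wedge A (vs ! i) (vs ! Suc i) \<noteq> {})"

definition is_weight :: "(nat \<Rightarrow> real) \<Rightarrow> bool" where
  "is_weight a \<longleftrightarrow> (\<forall>i\<ge>1. 0 < a i \<and> a i \<le> 1/2) \<and>
     (\<forall>i j. 1 \<le> i \<longrightarrow> i \<le> j \<longrightarrow> a j \<le> a i) \<and>
     a 1 = 1/2 \<and> a 2 = 1/2 \<and> a \<longlonglongrightarrow> 0"

definition Delta :: "(nat \<Rightarrow> real) \<Rightarrow> nat list \<Rightarrow> real" where
  "Delta a v = prod_list (map a v)"

definition rho :: "nat set \<Rightarrow> (nat \<Rightarrow> real) \<Rightarrow> (nat \<Rightarrow> nat) \<Rightarrow> (nat \<Rightarrow> nat) \<Rightarrow> real" where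
  "rho A a w u = Inf {sum_list (map (Delta a) vs) | vs. is_chain A w u vs}"

definition tree :: "nat set \<Rightarrow> (nat \<Rightarrow> real) \<Rightarrow> (nat \<Rightarrow> nat) set set" where
  "tree A a = infwords A // {(w, u). w \<in> infwords A \<and> u \<in> infwords A \<and> rho A a w u = 0}"

definition tdist :: "nat set \<Rightarrow> (nat \<Rightarrow> real) \<Rightarrow> (nat \<Rightarrow> nat) set \<Rightarrow> (nat \<Rightarrow> nat) set \<Rightarrow> real" where
  "tdist A a X Y = rho A a (SOME w. w \<in> X) (SOME u. u \<in> Y)"

definition geodesic_space :: "'p set \<Rightarrow> ('p \<Rightarrow> 'p \<Rightarrow> real) \<Rightarrow> bool" where
  "geodesic_space S d \<longleftrightarrow> (\<forall>x\<in>S. \<forall>y\<in>S. \<exists>\<gamma>. \<gamma> 0 = x \<and> \<gamma> (d x y) = y \<and>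
      \<gamma> ` {0..d x y} \<subseteq> S \<and> (\<forall>s\<in>{0..d x y}. \<forall>t\<in>{0..d x y}. d (\<gamma> s) (\<gamma> t) = \<bar>s - t\<bar>))"

end

theory Submission
  imports Defs
begin

(* The tree is rooted at the word ones = 1 1 1 ...  The words beginning with 1 form a copy of the
   whole tree scaled by 1/2; for a letter c \<noteq> 1 the words beginning with c form a copy scaled by a c,
   hung at height 1/2 from the point 1 2 2 2 ... = c 1 1 1 ... at which the edges {1 2^k, c 1^k} glue.
   Hence the Gromov product (x|y) based at ones, the height of the branch point of x and y, is the
   fixed point of a recursion on first letters that contracts by 1/2, and the candidate metric is
   d(x, y) = (x|x) + (y|y) - 2 (x|y); it satisfies the triangle inequality because
   min ((x|y), (y|z)) \<le> (x|z).
   Chains cannot beat d: a cylinder v has d-diameter at most Delta v, and the two ends of an edge are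
   at d-distance 0.  Conversely, chains through the gluing points give rho \<le> d, again by halving the
   error at each letter.  So rho = d, and the geodesic from x to y runs from x down to the branch point
   at height (x|y) and up to y, along segments from the root whose points can be written down letter
   by letter. *)

section \<open>Error halving\<close>

lemma nonpos_if_le_pow_half:
  assumes "\<And>n. e \<le> (1/2::real) ^ n"
  shows "e \<le> 0"
proof (rule ccontr)
  assume "\<not> e \<le> 0"
  then obtain n where "(1/2) ^ n < e"
    using real_arch_pow_inv[of e "1/2"] by auto
  then show False
    using assms[of n] by simp
qed

lemma le_by_halving:
  fixes f g :: "'a \<Rightarrow> real"
  assumes base: "\<And>x. x \<in> S \<Longrightarrow> f x \<le> g x + 1"
    and step: "\<And>q x. 0 \<le> q \<Longrightarrow> (\<And>y. y \<in> S \<Longrightarrow> f y \<le> g y + q) \<Longrightarrow> x \<in> S \<Longrightarrow> f x \<le> g x + q / 2"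
    and "x \<in> S"
  shows "f x \<le> g x"
proof -
  have bound: "f y \<le> g y + (1/2) ^ n" if "y \<in> S" for y n
    using that
  proof (induction n arbitrary: y)
    case 0
    then show ?case using base by simp
  next
    case (Suc n)
    then show ?case using step[of "(1/2) ^ n" y] by simp
  qed
  have "f x - g x \<le> 0"
    using bound[OF \<open>x \<in> S\<close>] by (intro nonpos_if_le_pow_half) (simp add: algebra_simps)
  then show ?thesis by simp
qed

lemma abs_half_le: "\<bar>r - s\<bar> \<le> q \<Longrightarrow> \<bar>r / 2 - s / 2\<bar> \<le> (q::real) / 2"
  by linarith

lemma abs_affine_le:
  fixes b c q r s :: real
  assumes "\<bar>r - s\<bar> \<le> q" "0 \<le> c" "c \<le> 1/2" "0 \<le> q"
  shows "\<bar>(b + c * r) - (b + c * s)\<bar> \<le> q / 2"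
proof -
  have "\<bar>(b + c * r) - (b + c * s)\<bar> = c * \<bar>r - s\<bar>"
    using assms(2) by (simp add: abs_mult right_diff_distrib[symmetric])
  also have "\<dots> \<le> 1/2 * q"
    using assms by (intro mult_mono) auto
  finally show ?thesis by simp
qed

lemma rescale_above_half:
  fixes t c h :: real
  assumes "1/2 < t" "t \<le> 1/2 + c * h" "0 \<le> c"
  shows "0 \<le> (t - 1/2) / c" "(t - 1/2) / c \<le> h" "t = 1/2 + c * ((t - 1/2) / c)"
proof -
  have "0 < c"
    using assms by (cases "c = 0") auto
  then show "0 \<le> (t - 1/2) / c" "(t - 1/2) / c \<le> h" "t = 1/2 + c * ((t - 1/2) / c)"
    using assms by (simp_all add: pos_divide_le_eq mult.commute)
qed

section \<open>Infinite words\<close>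

definition shift :: "(nat \<Rightarrow> nat) \<Rightarrow> nat \<Rightarrow> nat" where
  "shift x = (\<lambda>n. x (Suc n))"

abbreviation scons :: "nat \<Rightarrow> (nat \<Rightarrow> nat) \<Rightarrow> nat \<Rightarrow> nat" where
  "scons c x \<equiv> case_nat c x"

definition ones :: "nat \<Rightarrow> nat" where
  "ones = (\<lambda>_. 1)"

definition twos :: "nat \<Rightarrow> nat" where
  "twos = (\<lambda>_. 2)"

lemma shift_scons [simp]: "shift (scons c x) = x"
  by (simp add: shift_def)

lemma scons_shift: "scons (x 0) (shift x) = x"
  by (rule ext) (simp add: shift_def split: nat.split)

lemma ones_0 [simp]: "ones 0 = 1" and twos_0 [simp]: "twos 0 = 2"
  and shift_ones [simp]: "shift ones = ones" and shift_twos [simp]: "shift twos = twos"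
  by (simp_all add: ones_def twos_def shift_def)

lemma scons_1_ones: "scons 1 ones = ones" and scons_2_twos: "scons 2 twos = twos"
  by (rule ext, simp add: ones_def twos_def split: nat.split)+

lemma pref_0 [simp]: "pref x 0 = []"
  by (simp add: pref_def)

lemma pref_Suc_scons [simp]: "pref (scons c x) (Suc n) = c # pref x n"
  unfolding pref_def by (simp add: map_upt_Suc del: upt_Suc)

lemma length_pref [simp]: "length (pref x n) = n"
  by (simp add: pref_def)

lemma take_pref: "m \<le> n \<Longrightarrow> take m (pref x n) = pref x m"
  unfolding pref_def by (simp add: take_map min_def)

lemma pref_ones: "pref ones n = replicate n 1" and pref_twos: "pref twos n = replicate n 2"
  unfolding pref_def ones_def twos_def by (simp_all add: map_replicate_const)

lemma set_pref: "x \<in> infwords A \<Longrightarrow> set (pref x n) \<subseteq> A"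
  unfolding pref_def infwords_def by auto

lemma pref_in_words: "x \<in> infwords A \<Longrightarrow> pref x n \<in> words A n"
  unfolding words_def using set_pref by auto

lemma scons_in_infwords [simp]: "scons c x \<in> infwords A \<longleftrightarrow> c \<in> A \<and> x \<in> infwords A"
  unfolding infwords_def by (auto split: nat.splits)

lemma shift_in_infwords: "x \<in> infwords A \<Longrightarrow> shift x \<in> infwords A"
  unfolding infwords_def shift_def by auto

lemma infwords_letter: "x \<in> infwords A \<Longrightarrow> x 0 \<in> A"
  unfolding infwords_def by auto

lemma infwords_scons_cases:
  assumes "x \<in> infwords A"
  obtains c x' where "x = scons c x'" "c \<in> A" "x' \<in> infwords A"
  using that[of "x 0" "shift x"] scons_shift[of x] infwords_letter[OF assms] shift_in_infwords[OF assms]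
  by simp

lemma cyl_Nil [simp]: "cyl A [] = infwords A"
  unfolding cyl_def by simp

lemma scons_in_cyl_Cons: "scons c x \<in> cyl A (d # v) \<longleftrightarrow> c = d \<and> c \<in> A \<and> x \<in> cyl A v"
  unfolding cyl_def by auto

lemma cyl_Cons_cases:
  assumes "x \<in> cyl A (d # v)"
  obtains x' where "x = scons d x'" "x' \<in> cyl A v"
proof -
  have "x \<in> infwords A"
    using assms unfolding cyl_def by simp
  then obtain c x' where "x = scons c x'" "x' \<in> infwords A"
    by (rule infwords_scons_cases)
  moreover from this assms have "c = d" "x' \<in> cyl A v"
    using scons_in_cyl_Cons by auto
  ultimately show thesis
    using that by simp
qed

lemma pref_in_cyl: "x \<in> infwords A \<Longrightarrow> x \<in> cyl A (pref x n)"
  unfolding cyl_def by simp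

lemma cyl_take:
  assumes "x \<in> cyl A u" "m \<le> length u"
  shows "x \<in> cyl A (take m u)"
  using assms take_pref[of m "length u" x] unfolding cyl_def by (simp add: min_def)

lemma Delta_Nil [simp]: "Delta a [] = 1" and Delta_Cons [simp]: "Delta a (c # v) = a c * Delta a v"
  by (simp_all add: Delta_def)

lemma edges_glue: "i \<in> A \<Longrightarrow> i \<noteq> 1 \<Longrightarrow> {1 # replicate k 2, i # replicate k 1} \<in> edges A (Suc k)"
  by auto

lemma edges_Cons: "c \<in> A \<Longrightarrow> {u, w} \<in> edges A k \<Longrightarrow> {c # u, c # w} \<in> edges A (Suc k)"
  by auto

section \<open>The Gromov product based at the root\<close>

(* Clamping makes gromov_step a contraction for every a; on the letters of a weight nothing changes. *)
definition clamp_weight :: "(nat \<Rightarrow> real) \<Rightarrow> nat \<Rightarrow> real" where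
  "clamp_weight a c = max 0 (min (1/2) (a c))"

lemma clamp_weight_bounds: "0 \<le> clamp_weight a c" "clamp_weight a c \<le> 1/2"
  by (simp_all add: clamp_weight_def)

(* The height of the branch point of x and y, read off their first letters: below a common letter it
   is computed in the scaled copy (and shifted by 1/2 for c \<noteq> 1); if exactly one word starts with 1,
   the other one leaves the copy 1 through the gluing point 1 twos; two distinct letters \<noteq> 1 branch
   at that gluing point itself, at height 1/2. *)
definition gromov_step ::
  "(nat \<Rightarrow> real) \<Rightarrow> ((nat \<Rightarrow> nat) \<Rightarrow> (nat \<Rightarrow> nat) \<Rightarrow> real) \<Rightarrow> (nat \<Rightarrow> nat) \<Rightarrow> (nat \<Rightarrow> nat) \<Rightarrow> real"
where
  "gromov_step a G x y =
     (if x 0 = y 0 then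
        (if x 0 = 1 then G (shift x) (shift y) / 2
         else 1/2 + clamp_weight a (x 0) * G (shift x) (shift y))
      else if x 0 = 1 then G (shift x) twos / 2
      else if y 0 = 1 then G twos (shift y) / 2
      else 1/2)"

definition gromov_like :: "((nat \<Rightarrow> nat) \<Rightarrow> (nat \<Rightarrow> nat) \<Rightarrow> real) \<Rightarrow> bool" where
  "gromov_like G \<longleftrightarrow> (\<forall>u v w. 0 \<le> G u v \<and> G u v \<le> 1 \<and> G u v = G v u \<and> G u v \<le> G u u \<and>
      min (G u v) (G v w) \<le> G u w)"

lemma gromov_step_preserves_gromov_like:
  assumes "gromov_like G"
  shows "gromov_like (gromov_step a G)"
proof -
  have b: "0 \<le> G u v" "G u v \<le> 1" "G u v = G v u" "G u v \<le> G u u" "min (G u v) (G v w) \<le> G u w" for u v w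
    using assms unfolding gromov_like_def by blast+
  have m: "0 \<le> clamp_weight a c * G u v" "clamp_weight a c * G u v \<le> 1/2"
    "clamp_weight a c * G u v \<le> clamp_weight a c * G u u"
    "min (clamp_weight a c * G u v) (clamp_weight a c * G v w) \<le> clamp_weight a c * G u w" for c u v w
    using mult_mono[OF clamp_weight_bounds(2) b(2)] mult_left_mono[OF b(4) clamp_weight_bounds(1)]
      mult_left_mono[OF b(5) clamp_weight_bounds(1)] b(1) clamp_weight_bounds(1)
    by (auto simp: min_mult_distrib_left)
  have basic: "0 \<le> gromov_step a G x y \<and> gromov_step a G x y \<le> 1 \<and>
      gromov_step a G x y = gromov_step a G y x \<and> gromov_step a G x y \<le> gromov_step a G x x" for x y
    unfolding gromov_step_def using b m by (auto simp: divide_simps) (smt (verit) b m)+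
  have min_ineq: "min (gromov_step a G x y) (gromov_step a G y z) \<le> gromov_step a G x z" for x y z
  proof -
    note s = gromov_step_def[of a G]
    show ?thesis
      using b(5)[of "shift x" "shift y" "shift z"] b(5)[of "shift x" "shift y" twos] b(5)[of "shift x" twos "shift z"]
        b(5)[of twos "shift y" "shift z"] b(3)[of "shift y" twos] b(2)[of twos "shift y"]
        m(1)[of "x 0" "shift x" "shift z"] m(1)[of "y 0" "shift y" "shift z"] m(1)[of "x 0" "shift x" "shift y"]
        m(4)[of "x 0" "shift x" "shift y" "shift z"]
      unfolding s
      by (cases "x 0 = 1"; cases "y 0 = 1"; cases "z 0 = 1") (auto simp: min_le_iff_disj)
  qed
  show ?thesis
    unfolding gromov_like_def using basic min_ineq by blast
qed

lemma gromov_step_contraction: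
  assumes "\<And>u v. \<bar>G u v - H u v\<bar> \<le> e"
  shows "\<bar>gromov_step a G x y - gromov_step a H x y\<bar> \<le> e / 2"
proof -
  have "\<bar>clamp_weight a c * G u v - clamp_weight a c * H u v\<bar> \<le> e / 2" for c u v
  proof -
    have "\<bar>clamp_weight a c * G u v - clamp_weight a c * H u v\<bar> = clamp_weight a c * \<bar>G u v - H u v\<bar>"
      by (simp add: abs_mult clamp_weight_bounds right_diff_distrib[symmetric])
    also have "\<dots> \<le> 1/2 * e"
      using assms[of u v] clamp_weight_bounds[of a c] by (intro mult_mono) auto
    finally show ?thesis by simp
  qed
  then show ?thesis
    unfolding gromov_step_def using assms
    by (auto simp: abs_le_iff divide_simps) (smt (verit) assms abs_le_iff)+
qed

primrec gromov_approx :: "(nat \<Rightarrow> real) \<Rightarrow> nat \<Rightarrow> (nat \<Rightarrow> nat) \<Rightarrow> (nat \<Rightarrow> nat) \<Rightarrow> real" where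
  "gromov_approx a 0 = (\<lambda>_ _. 0)"
| "gromov_approx a (Suc n) = gromov_step a (gromov_approx a n)"

definition gromov :: "(nat \<Rightarrow> real) \<Rightarrow> (nat \<Rightarrow> nat) \<Rightarrow> (nat \<Rightarrow> nat) \<Rightarrow> real" where
  "gromov a x y = lim (\<lambda>n. gromov_approx a n x y)"

lemma gromov_approx_Suc_diff:
  "\<bar>gromov_approx a (Suc n) x y - gromov_approx a n x y\<bar> \<le> (1/2) ^ Suc n"
proof (induction n arbitrary: x y)
  case 0
  then show ?case by (simp add: gromov_step_def)
next
  case (Suc n)
  then show ?case
    using gromov_step_contraction[of "gromov_approx a (Suc n)" "gromov_approx a n" "(1/2) ^ Suc n" a x y]
    by simp
qed

lemma gromov_approx_tendsto: "(\<lambda>n. gromov_approx a n x y) \<longlonglongrightarrow> gromov a x y"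
proof -
  define d where "d n = gromov_approx a (Suc n) x y - gromov_approx a n x y" for n
  have "summable (\<lambda>n. (1/2::real) ^ Suc n)"
    by simp
  then have "summable d"
    by (rule summable_comparison_test[rotated]) (use gromov_approx_Suc_diff in \<open>auto simp: d_def\<close>)
  moreover have "gromov_approx a n x y = (\<Sum>i<n. d i)" for n
    using sum_lessThan_telescope[of "\<lambda>n. gromov_approx a n x y" n] by (simp add: d_def)
  ultimately have "convergent (\<lambda>n. gromov_approx a n x y)"
    using summable_LIMSEQ convergentI by fastforce
  then show ?thesis
    unfolding gromov_def by (rule convergent_LIMSEQ_iff[THEN iffD1])
qed

lemma gromov_fixpoint: "gromov_step a (gromov a) = gromov a"
proof (intro ext)
  fix x y
  have "(\<lambda>n. gromov_approx a (Suc n) x y) \<longlonglongrightarrow> gromov_step a (gromov a) x y"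
    unfolding gromov_approx.simps gromov_step_def by (auto intro!: tendsto_intros gromov_approx_tendsto)
  moreover have "(\<lambda>n. gromov_approx a (Suc n) x y) \<longlonglongrightarrow> gromov a x y"
    using gromov_approx_tendsto LIMSEQ_Suc by blast
  ultimately show "gromov_step a (gromov a) x y = gromov a x y"
    by (rule LIMSEQ_unique)
qed

lemma gromov_like_gromov: "gromov_like (gromov a)"
proof -
  have approx: "gromov_like (gromov_approx a n)" for n
    by (induction n) (simp_all add: gromov_like_def[of "\<lambda>_ _. 0"] gromov_step_preserves_gromov_like)
  note lim = gromov_approx_tendsto[of a]
  show ?thesis
    unfolding gromov_like_def
  proof (intro allI conjI)
    fix u v w
    show "0 \<le> gromov a u v" "gromov a u v \<le> 1"
      using approx by (auto simp: gromov_like_def intro: LIMSEQ_le_const[OF lim] LIMSEQ_le_const2[OF lim])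
    show "gromov a u v = gromov a v u"
      unfolding gromov_def using approx by (metis gromov_like_def)
    show "gromov a u v \<le> gromov a u u"
      using approx by (auto simp: gromov_like_def intro: LIMSEQ_le[OF lim lim])
    show "min (gromov a u v) (gromov a v w) \<le> gromov a u w"
      using approx by (auto simp: gromov_like_def intro: LIMSEQ_le[OF tendsto_min[OF lim lim] lim])
  qed
qed

lemma gromov_nonneg: "0 \<le> gromov a x y"
  and gromov_le_1: "gromov a x y \<le> 1"
  and gromov_commute: "gromov a x y = gromov a y x"
  and gromov_le_diag: "gromov a x y \<le> gromov a x x"
  and gromov_min_le: "min (gromov a x y) (gromov a y z) \<le> gromov a x z"
  using gromov_like_gromov[of a] unfolding gromov_like_def by blast+

lemma gromov_unfold: "gromov a x y = gromov_step a (gromov a) x y"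
  by (simp add: gromov_fixpoint)

lemma gromov_1_1: "x 0 = 1 \<Longrightarrow> y 0 = 1 \<Longrightarrow> gromov a x y = gromov a (shift x) (shift y) / 2"
  and gromov_same_letter: "x 0 = y 0 \<Longrightarrow> x 0 \<noteq> 1 \<Longrightarrow>
    gromov a x y = 1/2 + clamp_weight a (x 0) * gromov a (shift x) (shift y)"
  and gromov_1_other: "x 0 = 1 \<Longrightarrow> y 0 \<noteq> 1 \<Longrightarrow> gromov a x y = gromov a (shift x) twos / 2"
  and gromov_other_1: "x 0 \<noteq> 1 \<Longrightarrow> y 0 = 1 \<Longrightarrow> gromov a x y = gromov a twos (shift y) / 2"
  and gromov_distinct_letters: "x 0 \<noteq> 1 \<Longrightarrow> y 0 \<noteq> 1 \<Longrightarrow> x 0 \<noteq> y 0 \<Longrightarrow> gromov a x y = 1/2"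
  by (subst gromov_unfold; simp add: gromov_step_def)+

lemma clamp_weight_eq:
  assumes "is_weight a" "1 \<le> c"
  shows "clamp_weight a c = a c"
  using assms unfolding is_weight_def clamp_weight_def by auto

lemma gromov_ones_right [simp]: "gromov a x ones = 0"
proof -
  have "gromov a ones ones = 0"
    using gromov_1_1[of ones ones a] by simp
  then show ?thesis
    using gromov_nonneg[of a x ones] gromov_le_diag[of a ones x] gromov_commute[of a x ones] by linarith
qed

lemma weight_1: "is_weight a \<Longrightarrow> a 1 = 1/2" and weight_2: "is_weight a \<Longrightarrow> a 2 = 1/2"
  by (simp_all add: is_weight_def)

lemma gromov_twos_twos: "is_weight a \<Longrightarrow> gromov a twos twos = 1"
  using gromov_same_letter[of twos twos a] clamp_weight_eq[of a 2] weight_2[of a] by simp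

section \<open>The tree metric\<close>

definition height :: "(nat \<Rightarrow> real) \<Rightarrow> (nat \<Rightarrow> nat) \<Rightarrow> real" where
  "height a x = gromov a x x"

definition tree_metric :: "(nat \<Rightarrow> real) \<Rightarrow> (nat \<Rightarrow> nat) \<Rightarrow> (nat \<Rightarrow> nat) \<Rightarrow> real" where
  "tree_metric a x y = height a x + height a y - 2 * gromov a x y"

lemma height_bounds: "0 \<le> height a x" "height a x \<le> 1"
  unfolding height_def using gromov_nonneg gromov_le_1 by auto

lemma height_twos: "is_weight a \<Longrightarrow> height a twos = 1"
  by (simp add: height_def gromov_twos_twos)

lemma gromov_le_height: "gromov a x y \<le> height a x" "gromov a x y \<le> height a y"
  unfolding height_def using gromov_le_diag[of a x y] gromov_le_diag[of a y x] gromov_commute[of a x y]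
  by linarith+

lemma height_1: "x 0 = 1 \<Longrightarrow> height a x = height a (shift x) / 2"
  unfolding height_def by (rule gromov_1_1)

lemma height_other: "x 0 \<noteq> 1 \<Longrightarrow> height a x = 1/2 + clamp_weight a (x 0) * height a (shift x)"
  unfolding height_def by (rule gromov_same_letter) auto

lemma tree_metric_commute: "tree_metric a x y = tree_metric a y x"
  unfolding tree_metric_def using gromov_commute[of a x y] by linarith

lemma tree_metric_self [simp]: "tree_metric a x x = 0"
  by (simp add: tree_metric_def height_def)

lemma tree_metric_nonneg: "0 \<le> tree_metric a x y"
  unfolding tree_metric_def using gromov_le_height[of a x y] by simp

lemma tree_metric_triangle: "tree_metric a x z \<le> tree_metric a x y + tree_metric a y z"
  unfolding tree_metric_def
  using gromov_min_le[of a x y z] gromov_le_height(2)[of a x y] gromov_le_height(1)[of a y z]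
  by (simp add: min_def split: if_splits)

lemma tree_metric_1_1: "x 0 = 1 \<Longrightarrow> y 0 = 1 \<Longrightarrow> tree_metric a x y = tree_metric a (shift x) (shift y) / 2"
  unfolding tree_metric_def using height_1[of x a] height_1[of y a] gromov_1_1[of x y a] by simp

lemma tree_metric_same_letter: "x 0 = y 0 \<Longrightarrow> x 0 \<noteq> 1 \<Longrightarrow>
    tree_metric a x y = clamp_weight a (x 0) * tree_metric a (shift x) (shift y)"
  unfolding tree_metric_def using height_other[of x a] height_other[of y a] gromov_same_letter[of x y a]
  by (simp add: algebra_simps)

lemma tree_metric_1_other: "is_weight a \<Longrightarrow> x 0 = 1 \<Longrightarrow> y 0 \<noteq> 1 \<Longrightarrow>
    tree_metric a x y = tree_metric a (shift x) twos / 2 + clamp_weight a (y 0) * height a (shift y)"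
  unfolding tree_metric_def using height_1[of x a] height_other[of y a] gromov_1_other[of x y a] height_twos[of a]
  by simp

lemma tree_metric_distinct_letters: "x 0 \<noteq> 1 \<Longrightarrow> y 0 \<noteq> 1 \<Longrightarrow> x 0 \<noteq> y 0 \<Longrightarrow>
    tree_metric a x y = clamp_weight a (x 0) * height a (shift x) + clamp_weight a (y 0) * height a (shift y)"
  unfolding tree_metric_def using height_other[of x a] height_other[of y a] gromov_distinct_letters[of x y a]
  by (simp add: algebra_simps)

lemma tree_metric_scons:
  assumes "is_weight a" "1 \<le> c"
  shows "tree_metric a (scons c x) (scons c y) = a c * tree_metric a x y"
proof (cases "c = 1")
  case True
  then have "tree_metric a (scons c x) (scons c y) = tree_metric a x y / 2"
    using tree_metric_1_1[of "scons c x" "scons c y" a] by simp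
  moreover have "a c = 1/2"
    using True weight_1[OF assms(1)] by simp
  ultimately show ?thesis by (simp only:)
next
  case False
  then show ?thesis
    using tree_metric_same_letter[of "scons c x" "scons c y" a] clamp_weight_eq[OF assms] by simp
qed

lemma tree_metric_le_1:
  assumes "is_weight a"
  shows "tree_metric a x y \<le> 1"
proof -
  have "case_prod (tree_metric a) p \<le> 1" for p
  proof (rule le_by_halving[where S = UNIV and f = "case_prod (tree_metric a)" and g = "\<lambda>_. 1"])
    fix p :: "(nat \<Rightarrow> nat) \<times> (nat \<Rightarrow> nat)"
    show "case_prod (tree_metric a) p \<le> 1 + 1"
      using height_bounds[of a "fst p"] height_bounds[of a "snd p"] gromov_nonneg[of a "fst p" "snd p"]
      by (simp add: tree_metric_def split_beta)
  next
    fix q :: real and p :: "(nat \<Rightarrow> nat) \<times> (nat \<Rightarrow> nat)"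
    assume q: "0 \<le> q" and IH: "\<And>p'. p' \<in> UNIV \<Longrightarrow> case_prod (tree_metric a) p' \<le> 1 + q"
    obtain x y where p: "p = (x, y)"
      by (cases p)
    have IH': "tree_metric a u v \<le> 1 + q" for u v
      using IH[of "(u, v)"] by simp
    have scaled: "clamp_weight a c * r \<le> 1/2 * s" if "0 \<le> r" "r \<le> s" for c r s
      using that clamp_weight_bounds[of a c] by (intro mult_mono) auto
    have hs: "clamp_weight a c * height a u \<le> 1/2" for c u
      using scaled[of "height a u" 1] height_bounds[of a u] by simp
    have ts: "clamp_weight a c * tree_metric a u v \<le> 1/2 + q/2" for c u v
      using scaled[OF tree_metric_nonneg IH'[of u v], of c] by simp
    consider "x 0 = y 0" "x 0 = 1" | "x 0 = y 0" "x 0 \<noteq> 1" | "x 0 = 1" "y 0 \<noteq> 1" | "x 0 \<noteq> 1" "y 0 = 1"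
      | "x 0 \<noteq> 1" "y 0 \<noteq> 1" "x 0 \<noteq> y 0"
      by (cases "x 0 = 1"; cases "y 0 = 1"; cases "x 0 = y 0") auto
    then have "tree_metric a x y \<le> 1 + q / 2"
    proof cases
      case 1
      then have "tree_metric a x y = tree_metric a (shift x) (shift y) / 2"
        by (intro tree_metric_1_1) simp_all
      then show ?thesis using IH'[of "shift x" "shift y"] by linarith
    next
      case 2
      then have "tree_metric a x y = clamp_weight a (x 0) * tree_metric a (shift x) (shift y)"
        by (rule tree_metric_same_letter)
      then show ?thesis using ts[of "x 0" "shift x" "shift y"] by linarith
    next
      case 3
      then have "tree_metric a x y = tree_metric a (shift x) twos / 2 + clamp_weight a (y 0) * height a (shift y)"
        by (rule tree_metric_1_other[OF assms])
      then show ?thesis using IH'[of "shift x" twos] hs[of "y 0" "shift y"] by linarith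
    next
      case 4
      then have "tree_metric a y x = tree_metric a (shift y) twos / 2 + clamp_weight a (x 0) * height a (shift x)"
        by (intro tree_metric_1_other[OF assms])
      then show ?thesis
        using tree_metric_commute[of a x y] IH'[of "shift y" twos] hs[of "x 0" "shift x"] by linarith
    next
      case 5
      then have "tree_metric a x y = clamp_weight a (x 0) * height a (shift x) + clamp_weight a (y 0) * height a (shift y)"
        by (rule tree_metric_distinct_letters)
      then show ?thesis using q hs[of "x 0" "shift x"] hs[of "y 0" "shift y"] by linarith
    qed
    then show "case_prod (tree_metric a) p \<le> 1 + q / 2"
      by (simp add: p)
  qed simp
  from this[of "(x, y)"] show ?thesis by simp
qed

section \<open>Chains are no shorter than the tree metric\<close>

locale weighted_tree =
  fixes A :: "nat set" and a :: "nat \<Rightarrow> real"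
  assumes alphabet: "is_alphabet A" and weight: "is_weight a"
begin

lemma one_in_A: "1 \<in> A" and two_in_A: "2 \<in> A" and letter_pos: "c \<in> A \<Longrightarrow> 1 \<le> c"
  using alphabet unfolding is_alphabet_def by auto

lemma weight_pos: "c \<in> A \<Longrightarrow> 0 < a c" and weight_le_half: "c \<in> A \<Longrightarrow> a c \<le> 1/2"
  using weight letter_pos unfolding is_weight_def by auto

lemma clamp_weight_letter: "c \<in> A \<Longrightarrow> clamp_weight a c = a c"
  using clamp_weight_eq[OF weight letter_pos] .

lemma ones_in_infwords: "ones \<in> infwords A" and twos_in_infwords: "twos \<in> infwords A"
  unfolding infwords_def ones_def twos_def using one_in_A two_in_A by auto

lemma Delta_bounds:
  assumes "set v \<subseteq> A"
  shows "0 \<le> Delta a v \<and> Delta a v \<le> (1/2) ^ length v"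
  using assms
proof (induction v)
  case (Cons c v)
  then have "0 < a c" "a c \<le> 1/2" "0 \<le> Delta a v" "Delta a v \<le> (1/2) ^ length v"
    using weight_pos weight_le_half by auto
  then show ?case
    using mult_mono[of "a c" "1/2" "Delta a v" "(1/2) ^ length v"] by simp
qed simp

lemma tree_metric_le_Delta:
  assumes "x \<in> cyl A v" "y \<in> cyl A v"
  shows "tree_metric a x y \<le> Delta a v"
  using assms
proof (induction v arbitrary: x y)
  case Nil
  then show ?case using tree_metric_le_1[OF weight] by simp
next
  case (Cons c v)
  obtain x' y' where x: "x = scons c x'" "x' \<in> cyl A v" and y: "y = scons c y'" "y' \<in> cyl A v"
    using Cons.prems by (metis cyl_Cons_cases)
  have c: "c \<in> A"
    using Cons.prems(1) x(1) scons_in_cyl_Cons by blast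
  have "tree_metric a x y = a c * tree_metric a x' y'"
    unfolding x y using tree_metric_scons[OF weight letter_pos[OF c]] .
  also have "\<dots> \<le> a c * Delta a v"
    using Cons.IH[OF x(2) y(2)] weight_pos[OF c] by simp
  finally show ?case by simp
qed

lemma tree_metric_glue:
  assumes "i \<noteq> 1"
  shows "tree_metric a (scons 1 twos) (scons i ones) = 0"
  using tree_metric_1_other[OF weight, of "scons 1 twos" "scons i ones"] assms by (simp add: height_def)

lemma edge_cyls_meet:
  "{p, q} \<in> edges A n \<Longrightarrow> \<exists>x\<in>cyl A p. \<exists>y\<in>cyl A q. tree_metric a x y = 0"
proof (induction n arbitrary: p q)
  case 0
  then show ?case by simp
next
  case (Suc k)
  have meet_sym: "\<exists>x\<in>cyl A p. \<exists>y\<in>cyl A q. tree_metric a x y = 0"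
    if "\<exists>x\<in>cyl A s. \<exists>y\<in>cyl A t. tree_metric a x y = 0" "{p, q} = {s, t}" for s t
    using that unfolding doubleton_eq_iff by (metis tree_metric_commute)
  from Suc.prems consider
      (glue) i where "i \<in> A" "i \<noteq> 1" "{p, q} = {1 # replicate k 2, i # replicate k 1}"
    | (common) i u w where "i \<in> A" "{u, w} \<in> edges A k" "{p, q} = {i # u, i # w}"
    by auto
  then show ?case
  proof cases
    case glue
    have "scons 1 twos \<in> cyl A (1 # replicate k 2)" "scons i ones \<in> cyl A (i # replicate k 1)"
      using glue one_in_A twos_in_infwords ones_in_infwords by (simp_all add: cyl_def pref_ones pref_twos)
    then show ?thesis
      using meet_sym glue(3) tree_metric_glue[OF glue(2)] by blast
  next
    case common
    obtain x y where "x \<in> cyl A u" "y \<in> cyl A w" "tree_metric a x y = 0"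
      using Suc.IH[OF common(2)] by blast
    then have "scons i x \<in> cyl A (i # u)" "scons i y \<in> cyl A (i # w)"
      "tree_metric a (scons i x) (scons i y) = 0"
      using common(1) tree_metric_scons[OF weight letter_pos[OF common(1)]] by (simp_all add: scons_in_cyl_Cons)
    then show ?thesis
      using meet_sym common(3) by blast
  qed
qed

lemma wedge_half_close:
  assumes "x \<in> wedge_half A v w" "0 < e"
  shows "\<exists>z\<in>cyl A w. tree_metric a x z \<le> e"
proof -
  obtain n0 where n0: "(1/2::real) ^ n0 < e"
    using real_arch_pow_inv[OF assms(2), of "1/2"] by auto
  define n where "n = Suc (max n0 (max (length v) (length w)))"
  have x: "x \<in> infwords A"
    using assms(1) unfolding wedge_half_def cyl_def by auto
  have "n > max (length v) (length w)"
    unfolding n_def by (simp add: less_Suc_eq_le)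
  then obtain u where u: "u \<in> words A n" "take (length w) u = w" "{pref x n, u} \<in> edges A n"
    using assms(1) unfolding wedge_half_def by blast
  obtain p z where p: "p \<in> cyl A (pref x n)" and z: "z \<in> cyl A u" and pz: "tree_metric a p z = 0"
    using edge_cyls_meet[OF u(3)] by blast
  have "length w \<le> length u"
    using u(1) by (simp add: words_def n_def)
  then have "z \<in> cyl A w"
    using cyl_take[OF z] u(2) by metis
  moreover have "tree_metric a x p \<le> e"
  proof -
    have "tree_metric a x p \<le> Delta a (pref x n)"
      by (rule tree_metric_le_Delta[OF pref_in_cyl[OF x] p])
    also have "\<dots> \<le> (1/2) ^ n"
      using Delta_bounds[OF set_pref[OF x]] by simp
    also have "\<dots> \<le> (1/2) ^ n0"
      unfolding n_def by (intro power_decreasing) auto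
    finally show ?thesis using n0 by simp
  qed
  then have "tree_metric a x z \<le> e"
    using tree_metric_triangle[of a x z p] pz by linarith
  ultimately show ?thesis by blast
qed

lemma is_chain_singleton: "is_chain A x y [v] \<longleftrightarrow> set v \<subseteq> A \<and> x \<in> cyl A v \<and> y \<in> cyl A v"
  unfolding is_chain_def by auto

lemma is_chain_Cons_Cons:
  assumes "is_chain A x y (v # v' # vs)"
  shows "set v \<subseteq> A" "x \<in> cyl A v" "wedge A v v' \<noteq> {}"
    and "z \<in> cyl A v' \<Longrightarrow> is_chain A z y (v' # vs)"
proof -
  show "set v \<subseteq> A" "x \<in> cyl A v"
    using assms unfolding is_chain_def by auto
  show "wedge A v v' \<noteq> {}"
    using assms unfolding is_chain_def by force
  assume "z \<in> cyl A v'"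
  moreover have "wedge A ((v' # vs) ! i) ((v' # vs) ! Suc i) \<noteq> {}" if "Suc i < length (v' # vs)" for i
    using assms that unfolding is_chain_def by (metis Suc_less_eq length_Cons nth_Cons_Suc)
  ultimately show "is_chain A z y (v' # vs)"
    using assms unfolding is_chain_def by auto
qed

lemma tree_metric_le_chain_sum:
  "is_chain A x y vs \<Longrightarrow> tree_metric a x y \<le> sum_list (map (Delta a) vs)"
proof (induction vs arbitrary: x rule: induct_list012)
  case 1
  then show ?case by (simp add: is_chain_def)
next
  case (2 v)
  then show ?case using tree_metric_le_Delta by (simp add: is_chain_singleton)
next
  case (3 v v' vs)
  note chain = is_chain_Cons_Cons[OF "3.prems"]
  let ?S = "sum_list (map (Delta a) (v' # vs))"
  have IH: "tree_metric a z y \<le> ?S" if "z \<in> cyl A v'" for z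
    using "3.IH"(2) chain(4) that by blast
  obtain p where p: "p \<in> wedge A v v'"
    using chain(3) by blast
  have "tree_metric a x y \<le> Delta a v + ?S + e" if e: "0 < e" for e
  proof (cases "p \<in> wedge_half A v v'")
    case True
    then have "p \<in> cyl A v"
      unfolding wedge_half_def by auto
    moreover obtain z where "z \<in> cyl A v'" "tree_metric a p z \<le> e"
      using wedge_half_close[OF True e] by blast
    ultimately show ?thesis
      using tree_metric_triangle[of a x y p] tree_metric_triangle[of a p y z]
        tree_metric_le_Delta[OF chain(2)] IH by fastforce
  next
    case False
    then have half: "p \<in> wedge_half A v' v"
      using p unfolding wedge_def by auto
    then have "p \<in> cyl A v'"
      unfolding wedge_half_def by auto
    moreover obtain z where "z \<in> cyl A v" "tree_metric a p z \<le> e"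
      using wedge_half_close[OF half e] by blast
    ultimately show ?thesis
      using tree_metric_triangle[of a x y z] tree_metric_triangle[of a z y p] tree_metric_commute[of a z p]
        tree_metric_le_Delta[OF chain(2)] IH by fastforce
  qed
  then have "tree_metric a x y \<le> Delta a v + ?S"
    by (rule field_le_epsilon)
  then show ?case by simp
qed

section \<open>Chains realising the tree metric\<close>

abbreviation chain_sum :: "nat list list \<Rightarrow> real" where
  "chain_sum vs \<equiv> sum_list (map (Delta a) vs)"

lemma chain_sum_nonneg: "is_chain A x y vs \<Longrightarrow> 0 \<le> chain_sum vs"
  unfolding is_chain_def using Delta_bounds by (auto intro!: sum_list_nonneg)

lemma is_chain_Nil: "x \<in> infwords A \<Longrightarrow> y \<in> infwords A \<Longrightarrow> is_chain A x y [[]]"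
  unfolding is_chain_def by simp

lemma rho_le_chain_sum: "is_chain A x y vs \<Longrightarrow> rho A a x y \<le> chain_sum vs"
  unfolding rho_def using chain_sum_nonneg by (intro cInf_lower bdd_belowI) auto

lemma rho_greatest:
  assumes "x \<in> infwords A" "y \<in> infwords A" "\<And>vs. is_chain A x y vs \<Longrightarrow> r \<le> chain_sum vs"
  shows "r \<le> rho A a x y"
  unfolding rho_def using assms is_chain_Nil by (intro cInf_greatest) auto

lemma rho_nonneg: "x \<in> infwords A \<Longrightarrow> y \<in> infwords A \<Longrightarrow> 0 \<le> rho A a x y"
  using rho_greatest chain_sum_nonneg by blast

lemma rho_le_1: "x \<in> infwords A \<Longrightarrow> y \<in> infwords A \<Longrightarrow> rho A a x y \<le> 1"
  using rho_le_chain_sum[OF is_chain_Nil] by simp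

lemma tree_metric_le_rho: "x \<in> infwords A \<Longrightarrow> y \<in> infwords A \<Longrightarrow> tree_metric a x y \<le> rho A a x y"
  using rho_greatest tree_metric_le_chain_sum by blast

lemma is_chain_rev:
  assumes "is_chain A x y vs"
  shows "is_chain A y x (rev vs)"
  unfolding is_chain_def
proof (intro conjI allI impI)
  show "rev vs \<noteq> []" "\<forall>v\<in>set (rev vs). set v \<subseteq> A" "y \<in> cyl A (hd (rev vs))" "x \<in> cyl A (last (rev vs))"
    using assms unfolding is_chain_def by (auto simp: hd_rev last_rev)
  fix i
  assume i: "Suc i < length (rev vs)"
  define j where "j = length vs - Suc (Suc i)"
  have j: "Suc j < length vs" "rev vs ! i = vs ! Suc j" "rev vs ! Suc i = vs ! j"
    using i unfolding j_def by (auto simp: rev_nth Suc_diff_Suc)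
  then show "wedge A (rev vs ! i) (rev vs ! Suc i) \<noteq> {}"
    using assms unfolding is_chain_def wedge_def by auto
qed

lemma rho_commute: "rho A a x y = rho A a y x"
proof -
  have "{chain_sum vs | vs. is_chain A x y vs} = {chain_sum vs | vs. is_chain A y x vs}"
    using is_chain_rev rev_rev_ident by (metis (no_types, opaque_lifting) rev_map sum_list_rev)
  then show ?thesis
    unfolding rho_def by simp
qed

lemma edge_neighbour:
  "s \<in> words A (Suc m) \<Longrightarrow> \<exists>u\<in>words A (Suc m). take m u = take m s \<and> {s, u} \<in> edges A (Suc m)"
proof (induction m arbitrary: s)
  case 0
  then obtain c where s: "s = [c]" "c \<in> A"
    unfolding words_def by (auto simp: length_Suc_conv)
  show ?case
  proof (cases "c = 1")
    case True
    have "{[1], [2]} \<in> edges A (Suc 0)"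
      using edges_glue[OF two_in_A, of 0] by simp
    moreover have "[2] \<in> words A (Suc 0)"
      using two_in_A by (simp add: words_def)
    ultimately show ?thesis
      using s True by (metis take_0)
  next
    case False
    have "{[1], [c]} \<in> edges A (Suc 0)"
      using edges_glue[OF s(2) False, of 0] by simp
    then have "{[c], [1]} \<in> edges A (Suc 0)"
      by (simp add: insert_commute)
    moreover have "[1] \<in> words A (Suc 0)"
      using one_in_A by (simp add: words_def)
    ultimately show ?thesis
      using s by (metis take_0)
  qed
next
  case (Suc m)
  then obtain c s' where s: "s = c # s'" "c \<in> A" "s' \<in> words A (Suc m)"
    unfolding words_def by (auto simp: length_Suc_conv)
  obtain u where u: "u \<in> words A (Suc m)" "take m u = take m s'" "{s', u} \<in> edges A (Suc m)"
    using Suc.IH[OF s(3)] by blast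
  have "{s, c # u} \<in> edges A (Suc (Suc m))"
    using edges_Cons[OF s(2) u(3)] s(1) by simp
  moreover have "c # u \<in> words A (Suc (Suc m))"
    using u(1) s(2) unfolding words_def by auto
  moreover have "take (Suc m) (c # u) = take (Suc m) s"
    using u(2) s(1) by simp
  ultimately show ?case
    by blast
qed

lemma common_point_in_wedge_half:
  assumes y: "y \<in> cyl A v" "y \<in> cyl A w" and len: "length v \<le> length w"
  shows "y \<in> wedge_half A w v"
  unfolding wedge_half_def
proof (intro CollectI conjI allI impI)
  show "y \<in> cyl A w" by fact
  fix n
  assume n: "max (length w) (length v) < n"
  then obtain m where m: "n = Suc m"
    by (cases n) auto
  have "pref y n \<in> words A n"
    using y(1) pref_in_words unfolding cyl_def by blast
  then obtain u where u: "u \<in> words A n" "take m u = take m (pref y n)" "{pref y n, u} \<in> edges A n"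
    using edge_neighbour m by blast
  have "length v \<le> m"
    using n len m by simp
  then have "take (length v) u = take (length v) (pref y n)"
    using u(2) by (metis min.absorb1 take_take)
  also have "\<dots> = v"
    using take_pref[of "length v" n y] y(1) \<open>length v \<le> m\<close> m unfolding cyl_def by simp
  finally show "\<exists>u\<in>words A n. take (length v) u = v \<and> {pref y n, u} \<in> edges A n"
    using u by blast
qed

lemma wedge_nonempty_if_common_point:
  assumes "y \<in> cyl A v" "y \<in> cyl A w"
  shows "wedge A v w \<noteq> {}"
  using common_point_in_wedge_half[OF assms] common_point_in_wedge_half[OF assms(2,1)]
  unfolding wedge_def by (cases "length v \<le> length w") auto

lemma is_chain_append:
  assumes c1: "is_chain A x y vs" and c2: "is_chain A y z ws"
  shows "is_chain A x z (vs @ ws)"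
  unfolding is_chain_def
proof (intro conjI allI impI)
  have ne: "vs \<noteq> []" "ws \<noteq> []"
    using c1 c2 unfolding is_chain_def by auto
  show "vs @ ws \<noteq> []" "\<forall>v\<in>set (vs @ ws). set v \<subseteq> A" "x \<in> cyl A (hd (vs @ ws))" "z \<in> cyl A (last (vs @ ws))"
    using c1 c2 ne unfolding is_chain_def by auto
  have junction: "wedge A (last vs) (hd ws) \<noteq> {}"
    using c1 c2 unfolding is_chain_def by (intro wedge_nonempty_if_common_point) auto
  fix i
  assume i: "Suc i < length (vs @ ws)"
  consider "Suc i < length vs" | "Suc i = length vs" | "length vs \<le> i"
    by linarith
  then show "wedge A ((vs @ ws) ! i) ((vs @ ws) ! Suc i) \<noteq> {}"
  proof cases
    case 1
    then show ?thesis using c1 unfolding is_chain_def by (simp add: nth_append)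
  next
    case 2
    then have "i = length vs - 1"
      by simp
    then have "(vs @ ws) ! i = last vs" "(vs @ ws) ! Suc i = hd ws"
      using ne 2 by (auto simp: nth_append last_conv_nth hd_conv_nth)
    then show ?thesis using junction by simp
  next
    case 3
    then have "Suc (i - length vs) < length ws"
      "(vs @ ws) ! i = ws ! (i - length vs)" "(vs @ ws) ! Suc i = ws ! Suc (i - length vs)"
      using i by (auto simp: nth_append Suc_diff_le)
    then show ?thesis using c2 unfolding is_chain_def by simp
  qed
qed

lemma rho_triangle:
  assumes "x \<in> infwords A" "y \<in> infwords A" "z \<in> infwords A"
  shows "rho A a x z \<le> rho A a x y + rho A a y z"
proof -
  have "rho A a x z - chain_sum ws \<le> rho A a x y" if ws: "is_chain A y z ws" for ws
  proof (rule rho_greatest[OF assms(1,2)])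
    fix vs
    assume "is_chain A x y vs"
    then have "rho A a x z \<le> chain_sum (vs @ ws)"
      using rho_le_chain_sum is_chain_append ws by blast
    then show "rho A a x z - chain_sum ws \<le> chain_sum vs"
      by simp
  qed
  then have "rho A a x z - rho A a x y \<le> rho A a y z"
    by (intro rho_greatest[OF assms(2,3)]) (smt (verit))
  then show ?thesis by simp
qed

lemma wedge_half_scons:
  assumes "p \<in> wedge_half A v w" "c \<in> A"
  shows "scons c p \<in> wedge_half A (c # v) (c # w)"
  unfolding wedge_half_def
proof (intro CollectI conjI allI impI)
  show "scons c p \<in> cyl A (c # v)"
    using assms unfolding wedge_half_def by (auto simp: scons_in_cyl_Cons)
  fix n
  assume n: "max (length (c # v)) (length (c # w)) < n"
  then obtain m where m: "n = Suc m"
    by (cases n) auto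
  then have "max (length v) (length w) < m"
    using n by simp
  then obtain u where u: "u \<in> words A m" "take (length w) u = w" "{pref p m, u} \<in> edges A m"
    using assms(1) unfolding wedge_half_def by blast
  have "{pref (scons c p) n, c # u} \<in> edges A n"
    using edges_Cons[OF assms(2) u(3)] m by simp
  moreover have "c # u \<in> words A n"
    using u(1) assms(2) m unfolding words_def by auto
  ultimately show "\<exists>u\<in>words A n. take (length (c # w)) u = c # w \<and> {pref (scons c p) n, u} \<in> edges A n"
    using u(2) by force
qed

lemma is_chain_scons:
  assumes "is_chain A x y vs" "c \<in> A"
  shows "is_chain A (scons c x) (scons c y) (map ((#) c) vs)"
  unfolding is_chain_def
proof (intro conjI allI impI)
  show "map ((#) c) vs \<noteq> []" "\<forall>v\<in>set (map ((#) c) vs). set v \<subseteq> A"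
    "scons c x \<in> cyl A (hd (map ((#) c) vs))" "scons c y \<in> cyl A (last (map ((#) c) vs))"
    using assms unfolding is_chain_def by (auto simp: scons_in_cyl_Cons hd_map last_map)
  fix i
  assume i: "Suc i < length (map ((#) c) vs)"
  then have "wedge A (vs ! i) (vs ! Suc i) \<noteq> {}"
    using assms(1) unfolding is_chain_def by simp
  then obtain p where "p \<in> wedge A (vs ! i) (vs ! Suc i)"
    by blast
  then have "scons c p \<in> wedge A (c # vs ! i) (c # vs ! Suc i)"
    unfolding wedge_def using wedge_half_scons[OF _ assms(2)] by blast
  then show "wedge A (map ((#) c) vs ! i) (map ((#) c) vs ! Suc i) \<noteq> {}"
    using i by auto
qed

lemma rho_scons_le:
  assumes "c \<in> A" "x \<in> infwords A" "y \<in> infwords A"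
  shows "rho A a (scons c x) (scons c y) \<le> a c * rho A a x y"
proof -
  have "rho A a (scons c x) (scons c y) / a c \<le> rho A a x y"
  proof (rule rho_greatest[OF assms(2,3)])
    fix vs
    assume "is_chain A x y vs"
    then have "rho A a (scons c x) (scons c y) \<le> chain_sum (map ((#) c) vs)"
      by (rule rho_le_chain_sum[OF is_chain_scons[OF _ assms(1)]])
    also have "\<dots> = a c * chain_sum vs"
      by (induction vs) (auto simp: algebra_simps)
    finally show "rho A a (scons c x) (scons c y) / a c \<le> chain_sum vs"
      using weight_pos[OF assms(1)] by (simp add: field_simps)
  qed
  then show ?thesis
    using weight_pos[OF assms(1)] by (simp add: field_simps)
qed

lemma rho_triangle3:
  assumes "x \<in> infwords A" "y \<in> infwords A" "z \<in> infwords A" "u \<in> infwords A"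
  shows "rho A a x u \<le> rho A a x y + rho A a y z + rho A a z u"
  using rho_triangle[OF assms(1,2,4)] rho_triangle[OF assms(2,3,4)] by simp

lemma rho_glue:
  assumes "i \<in> A" "i \<noteq> 1"
  shows "rho A a (scons i ones) (scons 1 twos) = 0"
proof -
  have "rho A a (scons i ones) (scons 1 twos) \<le> (1/2) ^ k" for k
  proof -
    let ?v = "i # replicate k 1" and ?w = "1 # replicate k 2"
    have v: "scons i ones \<in> cyl A ?v" and w: "scons 1 twos \<in> cyl A ?w"
      using assms one_in_A ones_in_infwords twos_in_infwords by (simp_all add: cyl_def pref_ones pref_twos)
    have "scons i ones \<in> wedge_half A ?v ?w"
      unfolding wedge_half_def
    proof (intro CollectI conjI allI impI v)
      fix n
      assume n: "max (length ?v) (length ?w) < n"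
      then obtain m where m: "n = Suc m" "k \<le> m"
        by (cases n) auto
      have "{pref (scons i ones) n, 1 # replicate m 2} \<in> edges A n"
        using edges_glue[OF assms, of m] m by (simp add: pref_ones insert_commute)
      moreover have "1 # replicate m 2 \<in> words A n"
        using m one_in_A two_in_A by (simp add: words_def set_replicate_conv_if)
      moreover have "take (length ?w) (1 # replicate m 2) = ?w"
        using m by (simp add: min_def)
      ultimately show "\<exists>u\<in>words A n. take (length ?w) u = ?w \<and> {pref (scons i ones) n, u} \<in> edges A n"
        by blast
    qed
    then have "is_chain A (scons i ones) (scons 1 twos) [?v, ?w]"
      using v w assms one_in_A two_in_A unfolding is_chain_def wedge_def
      by (auto simp: less_Suc_eq nth_Cons')
    then have "rho A a (scons i ones) (scons 1 twos) \<le> chain_sum [?v, ?w]"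
      by (rule rho_le_chain_sum)
    also have "\<dots> = Delta a ?v + Delta a ?w"
      by (simp del: Delta_Cons)
    also have "\<dots> \<le> (1/2) ^ Suc k + (1/2) ^ Suc k"
      using Delta_bounds[of ?v] Delta_bounds[of ?w] assms one_in_A two_in_A
      by (intro add_mono) (simp_all add: set_replicate_conv_if)
    finally show ?thesis by simp
  qed
  then have "rho A a (scons i ones) (scons 1 twos) \<le> 0"
    by (rule nonpos_if_le_pow_half)
  then show ?thesis
    using rho_nonneg[of "scons i ones" "scons 1 twos"] assms one_in_A ones_in_infwords twos_in_infwords by simp
qed

lemma rho_glue_glue:
  assumes "i \<in> A" "i \<noteq> 1" "j \<in> A" "j \<noteq> 1"
  shows "rho A a (scons i ones) (scons j ones) = 0"
proof -
  have in_I: "scons i ones \<in> infwords A" "scons 1 twos \<in> infwords A" "scons j ones \<in> infwords A"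
    using assms one_in_A ones_in_infwords twos_in_infwords by simp_all
  have "rho A a (scons i ones) (scons j ones) \<le> rho A a (scons i ones) (scons 1 twos) + rho A a (scons 1 twos) (scons j ones)"
    by (rule rho_triangle[OF in_I])
  also have "\<dots> = 0"
    using rho_glue[OF assms(1,2)] rho_glue[OF assms(3,4)] rho_commute[of "scons 1 twos"] by simp
  finally show ?thesis
    using rho_nonneg[OF in_I(1,3)] by simp
qed

lemma rho_scons_1_le: "x \<in> infwords A \<Longrightarrow> y \<in> infwords A \<Longrightarrow> rho A a (scons 1 x) (scons 1 y) \<le> rho A a x y / 2"
  and rho_scons_2_le: "x \<in> infwords A \<Longrightarrow> y \<in> infwords A \<Longrightarrow> rho A a (scons 2 x) (scons 2 y) \<le> rho A a x y / 2"
  using rho_scons_le[OF one_in_A, of x y] rho_scons_le[OF two_in_A, of x y]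
  unfolding weight_1[OF weight] weight_2[OF weight] by simp_all

lemma rho_scons_le_half:
  assumes "c \<in> A" "x \<in> infwords A" "y \<in> infwords A"
  shows "rho A a (scons c x) (scons c y) \<le> 1/2"
proof -
  have "a c * rho A a x y \<le> 1/2 * 1"
    using weight_pos[OF assms(1)] weight_le_half[OF assms(1)] rho_nonneg[OF assms(2,3)] rho_le_1[OF assms(2,3)]
    by (intro mult_mono) auto
  then show ?thesis
    using rho_scons_le[OF assms] by simp
qed

lemma weight_mult_le:
  assumes "c \<in> A" "r \<le> s + q" "0 \<le> q"
  shows "a c * r \<le> a c * s + q / 2"
proof -
  have "a c * r \<le> a c * s + a c * q"
    using mult_left_mono[OF assms(2), of "a c"] weight_pos[OF assms(1)] by (simp add: algebra_simps)
  moreover have "a c * q \<le> 1/2 * q"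
    using mult_right_mono[OF weight_le_half[OF assms(1)] assms(3)] .
  ultimately show ?thesis by simp
qed

lemma rho_ones_le_height:
  assumes "x \<in> infwords A"
  shows "rho A a x ones \<le> height a x"
proof (rule le_by_halving[where S = "infwords A" and f = "\<lambda>x. rho A a x ones" and g = "height a", OF _ _ assms])
  fix x
  assume "x \<in> infwords A"
  then show "rho A a x ones \<le> height a x + 1"
    using rho_le_1 ones_in_infwords height_bounds(1)[of a x] by fastforce
next
  fix q x
  assume q: "0 \<le> q" and IH: "\<And>y. y \<in> infwords A \<Longrightarrow> rho A a y ones \<le> height a y + q"
    and x_in: "x \<in> infwords A"
  obtain c x' where x: "x = scons c x'" "c \<in> A" "x' \<in> infwords A"
    using x_in by (rule infwords_scons_cases)
  show "rho A a x ones \<le> height a x + q / 2"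
  proof (cases "c = 1")
    case True
    then have "rho A a x ones \<le> rho A a x' ones / 2"
      using rho_scons_1_le[OF x(3) ones_in_infwords] x(1) scons_1_ones by simp
    moreover have "height a x = height a x' / 2"
      using height_1[of x a] x(1) True by simp
    ultimately show ?thesis
      using IH[OF x(3)] by linarith
  next
    case False
    have in_I: "scons c ones \<in> infwords A" "scons 1 twos \<in> infwords A"
      using x(2) one_in_A ones_in_infwords twos_in_infwords by simp_all
    have "rho A a x ones \<le> rho A a x (scons c ones) + rho A a (scons c ones) (scons 1 twos) + rho A a (scons 1 twos) ones"
      using rho_triangle3[OF _ in_I ones_in_infwords] x by simp
    moreover have "rho A a x (scons c ones) \<le> a c * height a x' + q / 2"
      using rho_scons_le[OF x(2,3) ones_in_infwords] weight_mult_le[OF x(2) IH[OF x(3)] q] x(1) by simp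
    moreover have "rho A a (scons c ones) (scons 1 twos) = 0"
      by (rule rho_glue[OF x(2) False])
    moreover have "rho A a (scons 1 twos) ones \<le> 1/2"
      using rho_scons_le_half[OF one_in_A twos_in_infwords ones_in_infwords] scons_1_ones by simp
    moreover have "height a x = 1/2 + a c * height a x'"
      using height_other[of x a] x False clamp_weight_letter by simp
    ultimately show ?thesis by linarith
  qed
qed

lemma rho_twos_le_tree_metric:
  assumes "x \<in> infwords A"
  shows "rho A a x twos \<le> tree_metric a x twos"
proof (rule le_by_halving[where S = "infwords A" and f = "\<lambda>x. rho A a x twos" and g = "\<lambda>x. tree_metric a x twos", OF _ _ assms])
  fix x
  assume "x \<in> infwords A"
  then show "rho A a x twos \<le> tree_metric a x twos + 1"
    using rho_le_1 twos_in_infwords tree_metric_nonneg[of a x twos] by fastforce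
next
  fix q x
  assume q: "0 \<le> q" and IH: "\<And>y. y \<in> infwords A \<Longrightarrow> rho A a y twos \<le> tree_metric a y twos + q"
    and x_in: "x \<in> infwords A"
  obtain c x' where x: "x = scons c x'" "c \<in> A" "x' \<in> infwords A"
    using x_in by (rule infwords_scons_cases)
  have in_I: "scons 1 twos \<in> infwords A" "scons 2 ones \<in> infwords A"
    using one_in_A two_in_A ones_in_infwords twos_in_infwords by simp_all
  have to_twos: "rho A a (scons 2 ones) twos \<le> 1/2"
    using rho_scons_le_half[OF two_in_A ones_in_infwords twos_in_infwords] scons_2_twos by simp
  consider "c = 2" | "c = 1" | "c \<noteq> 1" "c \<noteq> 2"
    by blast
  then show "rho A a x twos \<le> tree_metric a x twos + q / 2"
  proof cases
    case 1
    then have "rho A a x twos \<le> rho A a x' twos / 2"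
      using rho_scons_2_le[OF x(3) twos_in_infwords] x(1) scons_2_twos by simp
    moreover have "tree_metric a x twos = tree_metric a x' twos / 2"
      using tree_metric_scons[OF weight, of 2 x' twos] x(1) 1 scons_2_twos weight_2[OF weight] by simp
    ultimately show ?thesis
      using IH[OF x(3)] by linarith
  next
    case 2
    have "rho A a x twos \<le> rho A a x (scons 1 twos) + rho A a (scons 1 twos) (scons 2 ones) + rho A a (scons 2 ones) twos"
      using rho_triangle3[OF _ in_I twos_in_infwords] x by simp
    moreover have "rho A a x (scons 1 twos) \<le> rho A a x' twos / 2"
      using rho_scons_1_le[OF x(3) twos_in_infwords] x(1) 2 by simp
    moreover have "rho A a (scons 1 twos) (scons 2 ones) = 0"
      using rho_glue[OF two_in_A] rho_commute[of "scons 1 twos"] by simp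
    moreover have "tree_metric a x twos = tree_metric a x' twos / 2 + 1/2"
      using tree_metric_1_other[OF weight, of x twos] x(1) 2 clamp_weight_letter[OF two_in_A]
        weight_2[OF weight] height_twos[OF weight] by simp
    ultimately show ?thesis
      using IH[OF x(3)] to_twos by linarith
  next
    case 3
    have "rho A a x twos \<le> rho A a x (scons c ones) + rho A a (scons c ones) (scons 2 ones) + rho A a (scons 2 ones) twos"
      using rho_triangle3[OF _ _ in_I(2) twos_in_infwords] x ones_in_infwords by simp
    moreover have "rho A a x (scons c ones) \<le> a c * height a x'"
      using rho_scons_le[OF x(2,3) ones_in_infwords] rho_ones_le_height[OF x(3)] weight_pos[OF x(2)] x(1)
      by (meson mult_left_mono less_imp_le order_trans)
    moreover have "rho A a (scons c ones) (scons 2 ones) = 0"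
      using rho_glue_glue[OF x(2) 3(1) two_in_A] by simp
    moreover have "tree_metric a x twos = a c * height a x' + 1/2"
      using tree_metric_distinct_letters[of x twos a] x(1) 3 clamp_weight_letter[OF two_in_A]
        clamp_weight_letter[OF x(2)] weight_2[OF weight] height_twos[OF weight] by simp
    ultimately show ?thesis
      using to_twos q by linarith
  qed
qed

lemma rho_scons_ones_le:
  assumes "c \<in> A" "x \<in> infwords A"
  shows "rho A a (scons c x) (scons c ones) \<le> a c * height a x"
  using rho_scons_le[OF assms ones_in_infwords] rho_ones_le_height[OF assms(2)] weight_pos[OF assms(1)]
  by (meson mult_left_mono less_imp_le order_trans)

lemma rho_le_tree_metric_1_other:
  assumes x: "x = scons 1 x'" "x' \<in> infwords A" and y: "y = scons d y'" "d \<in> A" "d \<noteq> 1" "y' \<in> infwords A"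
  shows "rho A a x y \<le> tree_metric a x y"
proof -
  have in_I: "x \<in> infwords A" "scons 1 twos \<in> infwords A" "scons d ones \<in> infwords A" "y \<in> infwords A"
    using x y one_in_A ones_in_infwords twos_in_infwords by simp_all
  have "rho A a x y \<le> rho A a x (scons 1 twos) + rho A a (scons 1 twos) (scons d ones) + rho A a (scons d ones) y"
    by (rule rho_triangle3[OF in_I])
  moreover have "rho A a x (scons 1 twos) \<le> tree_metric a x' twos / 2"
    using rho_scons_1_le[OF x(2) twos_in_infwords] rho_twos_le_tree_metric[OF x(2)] x(1) by simp
  moreover have "rho A a (scons 1 twos) (scons d ones) = 0"
    using rho_glue[OF y(2,3)] rho_commute[of "scons 1 twos"] by simp
  moreover have "rho A a (scons d ones) y \<le> a d * height a y'"
    using rho_scons_ones_le[OF y(2,4)] rho_commute[of "scons d ones"] y(1) by simp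
  moreover have "tree_metric a x y = tree_metric a x' twos / 2 + a d * height a y'"
    using tree_metric_1_other[OF weight, of x y] x(1) y(1,3) clamp_weight_letter[OF y(2)] by simp
  ultimately show ?thesis by linarith
qed

lemma rho_le_tree_metric:
  assumes "x \<in> infwords A" "y \<in> infwords A"
  shows "rho A a x y \<le> tree_metric a x y"
proof -
  let ?I = "infwords A \<times> infwords A"
  have "case_prod (rho A a) p \<le> case_prod (tree_metric a) p" if "p \<in> ?I" for p
  proof (rule le_by_halving[where S = ?I and f = "case_prod (rho A a)" and g = "case_prod (tree_metric a)", OF _ _ that])
    fix p
    assume "p \<in> ?I"
    then show "case_prod (rho A a) p \<le> case_prod (tree_metric a) p + 1"
      using rho_le_1[of "fst p" "snd p"] tree_metric_nonneg[of a "fst p" "snd p"]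
      by (simp add: split_beta mem_Times_iff)
  next
    fix q p
    assume q: "0 \<le> q" and IH: "\<And>p'. p' \<in> ?I \<Longrightarrow> case_prod (rho A a) p' \<le> case_prod (tree_metric a) p' + q"
      and p_in: "p \<in> ?I"
    obtain x y where p: "p = (x, y)"
      by (cases p)
    obtain c x' where x: "x = scons c x'" "c \<in> A" "x' \<in> infwords A"
      using p_in p by (auto elim: infwords_scons_cases)
    obtain d y' where y: "y = scons d y'" "d \<in> A" "y' \<in> infwords A"
      using p_in p by (auto elim: infwords_scons_cases)
    have "rho A a x y \<le> tree_metric a x y + q / 2"
    proof -
      consider "c = d" | "c = 1" "d \<noteq> 1" | "c \<noteq> 1" "d = 1" | "c \<noteq> 1" "d \<noteq> 1" "c \<noteq> d"
        by blast
      then show ?thesis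
      proof cases
        case 1
        have "rho A a x y \<le> a c * rho A a x' y'"
          using rho_scons_le[OF x(2,3) y(3)] x(1) y(1) 1 by simp
        moreover have "a c * rho A a x' y' \<le> a c * tree_metric a x' y' + q / 2"
          using weight_mult_le[OF x(2) _ q] IH[of "(x', y')"] x(3) y(3) by simp
        moreover have "tree_metric a x y = a c * tree_metric a x' y'"
          using tree_metric_scons[OF weight letter_pos[OF x(2)]] x(1) y(1) 1 by simp
        ultimately show ?thesis by linarith
      next
        case 2
        then show ?thesis
          using rho_le_tree_metric_1_other[OF _ x(3) y(1,2) _ y(3)] x(1) q by simp
      next
        case 3
        then have "rho A a y x \<le> tree_metric a y x"
          using rho_le_tree_metric_1_other[OF _ y(3) x(1,2) _ x(3)] y(1) by simp
        then show ?thesis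
          using rho_commute[of x y] tree_metric_commute[of a x y] q by simp
      next
        case 4
        have in_I: "x \<in> infwords A" "scons c ones \<in> infwords A" "scons d ones \<in> infwords A" "y \<in> infwords A"
          using x y ones_in_infwords by simp_all
        have "rho A a x y \<le> rho A a x (scons c ones) + rho A a (scons c ones) (scons d ones) + rho A a (scons d ones) y"
          by (rule rho_triangle3[OF in_I])
        moreover have "rho A a x (scons c ones) \<le> a c * height a x'"
          using rho_scons_ones_le[OF x(2,3)] x(1) by simp
        moreover have "rho A a (scons c ones) (scons d ones) = 0"
          using rho_glue_glue[OF x(2) 4(1) y(2) 4(2)] .
        moreover have "rho A a (scons d ones) y \<le> a d * height a y'"
          using rho_scons_ones_le[OF y(2,3)] rho_commute[of "scons d ones"] y(1) by simp
        moreover have "tree_metric a x y = a c * height a x' + a d * height a y'"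
          using tree_metric_distinct_letters[of x y a] x y 4 clamp_weight_letter by simp
        ultimately show ?thesis
          using q by linarith
      qed
    qed
    then show "case_prod (rho A a) p \<le> case_prod (tree_metric a) p + q / 2"
      by (simp add: p)
  qed
  from this[of "(x, y)"] show ?thesis
    using assms by simp
qed

lemma rho_eq_tree_metric: "x \<in> infwords A \<Longrightarrow> y \<in> infwords A \<Longrightarrow> rho A a x y = tree_metric a x y"
  using rho_le_tree_metric tree_metric_le_rho by (simp add: order_antisym)

end

section \<open>Segments from the root and geodesics\<close>

(* seg_point a x t is the point at height t on the segment from ones to x.  Under a letter 1 heights
   double; under a letter c \<noteq> 1 the segment first runs from ones to the gluing point 1 twos (heights
   up to 1/2) and then continues into the copy scaled by a c. *)
definition seg_step :: "(nat \<Rightarrow> real) \<Rightarrow> (nat \<Rightarrow> nat) \<times> real \<Rightarrow> (nat \<Rightarrow> nat) \<times> real" where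
  "seg_step a = (\<lambda>(x, t).
     if x 0 = 1 then (shift x, 2 * t)
     else if t \<le> 1/2 then (twos, 2 * t)
     else (shift x, (t - 1/2) / clamp_weight a (x 0)))"

definition seg_letter :: "(nat \<Rightarrow> nat) \<times> real \<Rightarrow> nat" where
  "seg_letter = (\<lambda>(x, t). if x 0 \<noteq> 1 \<and> 1/2 < t then x 0 else 1)"

definition seg_point :: "(nat \<Rightarrow> real) \<Rightarrow> (nat \<Rightarrow> nat) \<Rightarrow> real \<Rightarrow> nat \<Rightarrow> nat" where
  "seg_point a x t = (\<lambda>n. seg_letter ((seg_step a ^^ n) (x, t)))"

lemma seg_point_unfold:
  "seg_point a x t = scons (seg_letter (x, t)) (case_prod (seg_point a) (seg_step a (x, t)))"
proof (rule ext)
  fix n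
  show "seg_point a x t n = scons (seg_letter (x, t)) (case_prod (seg_point a) (seg_step a (x, t))) n"
    by (cases n) (simp_all add: seg_point_def funpow_Suc_right split_beta del: funpow.simps)
qed

lemma seg_point_1: "x 0 = 1 \<Longrightarrow> seg_point a x t = scons 1 (seg_point a (shift x) (2 * t))"
  and seg_point_low: "x 0 \<noteq> 1 \<Longrightarrow> t \<le> 1/2 \<Longrightarrow> seg_point a x t = scons 1 (seg_point a twos (2 * t))"
  and seg_point_high: "x 0 \<noteq> 1 \<Longrightarrow> 1/2 < t \<Longrightarrow>
    seg_point a x t = scons (x 0) (seg_point a (shift x) ((t - 1/2) / clamp_weight a (x 0)))"
  by (subst seg_point_unfold; simp add: seg_step_def seg_letter_def)+

lemma (in weighted_tree) seg_point_in_infwords: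
  assumes "x \<in> infwords A"
  shows "seg_point a x t \<in> infwords A"
proof -
  have "fst ((seg_step a ^^ n) (x, t)) \<in> infwords A" for n
    by (induction n) (auto simp: assms seg_step_def split_beta shift_in_infwords twos_in_infwords)
  then have "seg_letter ((seg_step a ^^ n) (x, t)) \<in> A" for n
    using one_in_A infwords_letter by (auto simp: seg_letter_def split_beta)
  then show ?thesis
    unfolding seg_point_def infwords_def by simp
qed

definition geodesic_path :: "(nat \<Rightarrow> real) \<Rightarrow> (nat \<Rightarrow> nat) \<Rightarrow> (nat \<Rightarrow> nat) \<Rightarrow> real \<Rightarrow> nat \<Rightarrow> nat" where
  "geodesic_path a x y s =
     (if s \<le> height a x - gromov a x y then seg_point a x (height a x - s)
      else seg_point a y (s - height a x + 2 * gromov a x y))"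

context
  fixes a :: "nat \<Rightarrow> real"
  assumes weight: "is_weight a"
begin

lemma gromov_seg_point_end:
  assumes "0 \<le> t" "t \<le> height a x"
  shows "gromov a (seg_point a x t) x = t"
proof -
  let ?S = "{(x, t). 0 \<le> t \<and> t \<le> height a x}"
  let ?f = "\<lambda>(x, t). \<bar>gromov a (seg_point a x t) x - t\<bar>"
  have "?f p \<le> 0" if "p \<in> ?S" for p
  proof (rule le_by_halving[where S = ?S and f = ?f and g = "\<lambda>_. 0", OF _ _ that])
    fix p
    assume "p \<in> ?S"
    then obtain x t where "p = (x, t)" "0 \<le> t" "t \<le> height a x"
      by auto
    then show "?f p \<le> 0 + 1"
      using gromov_nonneg[of a "seg_point a x t" x] gromov_le_1[of a "seg_point a x t" x] height_bounds(2)[of a x]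
      by (simp add: abs_le_iff)
  next
    fix q p
    assume q: "0 \<le> q" and IH: "\<And>p'. p' \<in> ?S \<Longrightarrow> ?f p' \<le> 0 + q" and "p \<in> ?S"
    then obtain x t where p: "p = (x, t)" and t: "0 \<le> t" "t \<le> height a x"
      by auto
    have IH': "\<bar>gromov a (seg_point a y s) y - s\<bar> \<le> q" if "0 \<le> s" "s \<le> height a y" for y s
      using IH[of "(y, s)"] that by simp
    have "\<bar>gromov a (seg_point a x t) x - t\<bar> \<le> q / 2"
    proof (cases "x 0 = 1")
      case True
      then have eq: "gromov a (seg_point a x t) x = gromov a (seg_point a (shift x) (2 * t)) (shift x) / 2"
        using seg_point_1[where x = x, OF True] gromov_1_1 by simp
      have "2 * t \<le> height a (shift x)"
        using t height_1[where x = x, OF True, of a] by simp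
      then show ?thesis
        unfolding eq using abs_half_le[OF IH'[of "2 * t" "shift x"]] t by simp
    next
      case x: False
      show ?thesis
      proof (cases "t \<le> 1/2")
        case True
        then have eq: "gromov a (seg_point a x t) x = gromov a (seg_point a twos (2 * t)) twos / 2"
          using seg_point_low[where x = x, OF x True] gromov_1_other x by simp
        show ?thesis
          unfolding eq using abs_half_le[OF IH'[of "2 * t" twos]] t True height_twos[OF weight] by simp
      next
        case False
        define t' where "t' = (t - 1/2) / clamp_weight a (x 0)"
        have t': "0 \<le> t'" "t' \<le> height a (shift x)" "t = 1/2 + clamp_weight a (x 0) * t'"
          using rescale_above_half[where t = t and c = "clamp_weight a (x 0)" and h = "height a (shift x)"]
            False t(2) height_other[of x a, OF x] clamp_weight_bounds(1)
          unfolding t'_def by auto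
        have eq: "gromov a (seg_point a x t) x = 1/2 + clamp_weight a (x 0) * gromov a (seg_point a (shift x) t') (shift x)"
          using seg_point_high[where x = x, OF x] False gromov_same_letter x unfolding t'_def by simp
        show ?thesis
          unfolding eq using abs_affine_le[OF IH'[OF t'(1,2)] clamp_weight_bounds q] t'(3) False by simp
      qed
    qed
    then show "?f p \<le> 0 + q / 2"
      by (simp add: p)
  qed
  from this[of "(x, t)"] show ?thesis
    using assms by simp
qed

lemma gromov_seg_points:
  assumes "0 \<le> s" "s \<le> t" "t \<le> height a x"
  shows "gromov a (seg_point a x s) (seg_point a x t) = s"
proof -
  let ?S = "{(x, s, t). 0 \<le> s \<and> s \<le> t \<and> t \<le> height a x}"
  let ?f = "\<lambda>(x, s, t). \<bar>gromov a (seg_point a x s) (seg_point a x t) - s\<bar>"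
  have "?f p \<le> 0" if "p \<in> ?S" for p
  proof (rule le_by_halving[where S = ?S and f = ?f and g = "\<lambda>_. 0", OF _ _ that])
    fix p
    assume "p \<in> ?S"
    then obtain x s t where "p = (x, s, t)" "0 \<le> s" "s \<le> t" "t \<le> height a x"
      by auto
    then show "?f p \<le> 0 + 1"
      using gromov_nonneg[of a "seg_point a x s" "seg_point a x t"] gromov_le_1[of a "seg_point a x s" "seg_point a x t"]
        height_bounds(2)[of a x]
      by (simp add: abs_le_iff)
  next
    fix q p
    assume q: "0 \<le> q" and IH: "\<And>p'. p' \<in> ?S \<Longrightarrow> ?f p' \<le> 0 + q" and "p \<in> ?S"
    then obtain x s t where p: "p = (x, s, t)" and st: "0 \<le> s" "s \<le> t" "t \<le> height a x"
      by auto
    have IH': "\<bar>gromov a (seg_point a y s') (seg_point a y t') - s'\<bar> \<le> q"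
      if "0 \<le> s'" "s' \<le> t'" "t' \<le> height a y" for y s' t'
      using IH[of "(y, s', t')"] that by simp
    have "\<bar>gromov a (seg_point a x s) (seg_point a x t) - s\<bar> \<le> q / 2"
    proof (cases "x 0 = 1")
      case True
      then have eq: "gromov a (seg_point a x s) (seg_point a x t)
          = gromov a (seg_point a (shift x) (2 * s)) (seg_point a (shift x) (2 * t)) / 2"
        using seg_point_1[where x = x] gromov_1_1 by simp
      have "2 * t \<le> height a (shift x)"
        using st height_1[where x = x, OF True, of a] by simp
      then show ?thesis
        unfolding eq using abs_half_le[OF IH'[of "2 * s" "2 * t" "shift x"]] st by simp
    next
      case x: False
      consider "t \<le> 1/2" | "s \<le> 1/2" "1/2 < t" | "1/2 < s"
        by linarith
      then show ?thesis
      proof cases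
        case 1
        then have eq: "gromov a (seg_point a x s) (seg_point a x t)
            = gromov a (seg_point a twos (2 * s)) (seg_point a twos (2 * t)) / 2"
          using seg_point_low[where x = x, OF x] st gromov_1_1 by simp
        show ?thesis
          unfolding eq using abs_half_le[OF IH'[of "2 * s" "2 * t" twos]] st 1 height_twos[OF weight] by simp
      next
        case 2
        then have "gromov a (seg_point a x s) (seg_point a x t) = gromov a (seg_point a twos (2 * s)) twos / 2"
          using seg_point_low[where x = x, OF x] seg_point_high[where x = x, OF x] gromov_1_other x by simp
        also have "\<dots> = s"
          using gromov_seg_point_end[of "2 * s" twos] st 2 height_twos[OF weight] by simp
        finally show ?thesis
          using q by simp
      next
        case 3
        define s' where "s' = (s - 1/2) / clamp_weight a (x 0)"
        define t' where "t' = (t - 1/2) / clamp_weight a (x 0)"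
        have hx: "height a x = 1/2 + clamp_weight a (x 0) * height a (shift x)"
          using height_other[of x a, OF x] .
        have s': "0 \<le> s'" "s = 1/2 + clamp_weight a (x 0) * s'"
          using rescale_above_half[where t = s and c = "clamp_weight a (x 0)" and h = "height a (shift x)"] 3 st hx
            clamp_weight_bounds(1)
          unfolding s'_def by auto
        have t': "t' \<le> height a (shift x)"
          using rescale_above_half[where t = t and c = "clamp_weight a (x 0)" and h = "height a (shift x)"] 3 st hx
            clamp_weight_bounds(1)
          unfolding t'_def by auto
        have "s' \<le> t'"
          unfolding s'_def t'_def using st(2) clamp_weight_bounds(1)[of a "x 0"] by (simp add: divide_right_mono)
        have eq: "gromov a (seg_point a x s) (seg_point a x t)
            = 1/2 + clamp_weight a (x 0) * gromov a (seg_point a (shift x) s') (seg_point a (shift x) t')"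
          using seg_point_high[where x = x, OF x] 3 st gromov_same_letter x unfolding s'_def t'_def by simp
        show ?thesis
          unfolding eq
          using abs_affine_le[OF IH'[OF s'(1) \<open>s' \<le> t'\<close> t'] clamp_weight_bounds q] s'(2) by simp
      qed
    qed
    then show "?f p \<le> 0 + q / 2"
      by (simp add: p)
  qed
  from this[of "(x, s, t)"] show ?thesis
    using assms by simp
qed

lemma height_seg_point: "0 \<le> t \<Longrightarrow> t \<le> height a x \<Longrightarrow> height a (seg_point a x t) = t"
  using gromov_seg_points[of t t x] by (simp add: height_def)

lemma tree_metric_seg_points:
  assumes "0 \<le> s" "s \<le> height a x" "0 \<le> t" "t \<le> height a x"
  shows "tree_metric a (seg_point a x s) (seg_point a x t) = \<bar>s - t\<bar>"
proof (cases "s \<le> t")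
  case True
  then show ?thesis
    using gromov_seg_points[of s t x] height_seg_point assms unfolding tree_metric_def by simp
next
  case False
  then show ?thesis
    using gromov_seg_points[of t s x] gromov_commute height_seg_point assms unfolding tree_metric_def by simp
qed

lemma tree_metric_seg_point_end:
  "0 \<le> t \<Longrightarrow> t \<le> height a x \<Longrightarrow> tree_metric a (seg_point a x t) x = height a x - t"
  unfolding tree_metric_def using height_seg_point gromov_seg_point_end by simp

lemma gromov_seg_points_branch:
  assumes "0 \<le> t" "t \<le> gromov a x y"
  shows "gromov a (seg_point a x t) (seg_point a y t) = t"
proof -
  let ?S = "{(x, y, t). 0 \<le> t \<and> t \<le> gromov a x y}"
  let ?f = "\<lambda>(x, y, t). \<bar>gromov a (seg_point a x t) (seg_point a y t) - t\<bar>"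
  have "?f p \<le> 0" if "p \<in> ?S" for p
  proof (rule le_by_halving[where S = ?S and f = ?f and g = "\<lambda>_. 0", OF _ _ that])
    fix p
    assume "p \<in> ?S"
    then obtain x y t where "p = (x, y, t)" "0 \<le> t" "t \<le> gromov a x y"
      by auto
    then show "?f p \<le> 0 + 1"
      using gromov_nonneg[of a "seg_point a x t" "seg_point a y t"] gromov_le_1[of a "seg_point a x t" "seg_point a y t"]
        gromov_le_1[of a x y]
      by (simp add: abs_le_iff)
  next
    fix q p
    assume q: "0 \<le> q" and IH: "\<And>p'. p' \<in> ?S \<Longrightarrow> ?f p' \<le> 0 + q" and "p \<in> ?S"
    then obtain x y t where p: "p = (x, y, t)" and t: "0 \<le> t" "t \<le> gromov a x y"
      by auto
    have IH': "\<bar>gromov a (seg_point a u t') (seg_point a v t') - t'\<bar> \<le> q"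
      if "0 \<le> t'" "t' \<le> gromov a u v" for u v t'
      using IH[of "(u, v, t')"] that by simp
    consider "x 0 = 1" "y 0 = 1" | "x 0 = 1" "y 0 \<noteq> 1" | "x 0 \<noteq> 1" "y 0 = 1"
      | "x 0 \<noteq> 1" "y 0 \<noteq> 1" "t \<le> 1/2" | "x 0 \<noteq> 1" "y 0 \<noteq> 1" "1/2 < t"
      by linarith
    then have "\<bar>gromov a (seg_point a x t) (seg_point a y t) - t\<bar> \<le> q / 2"
    proof cases
      case 1
      then have eq: "gromov a (seg_point a x t) (seg_point a y t)
          = gromov a (seg_point a (shift x) (2 * t)) (seg_point a (shift y) (2 * t)) / 2"
        using seg_point_1[where x = x] seg_point_1[where x = y] gromov_1_1 by simp
      have "2 * t \<le> gromov a (shift x) (shift y)"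
        using t gromov_1_1[of x y a] 1 by simp
      then show ?thesis
        unfolding eq using abs_half_le[OF IH'[of "2 * t"]] t by simp
    next
      case 2
      then have g: "gromov a x y = gromov a (shift x) twos / 2"
        by (rule gromov_1_other)
      then have "t \<le> 1/2"
        using t gromov_le_1[of a "shift x" twos] by simp
      then have eq: "gromov a (seg_point a x t) (seg_point a y t)
          = gromov a (seg_point a (shift x) (2 * t)) (seg_point a twos (2 * t)) / 2"
        using seg_point_1[where x = x] seg_point_low[where x = y] 2 gromov_1_1 by simp
      show ?thesis
        unfolding eq using abs_half_le[OF IH'[of "2 * t"]] t g by simp
    next
      case 3
      then have g: "gromov a x y = gromov a twos (shift y) / 2"
        by (rule gromov_other_1)
      then have "t \<le> 1/2"
        using t gromov_le_1[of a twos "shift y"] by simp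
      then have eq: "gromov a (seg_point a x t) (seg_point a y t)
          = gromov a (seg_point a twos (2 * t)) (seg_point a (shift y) (2 * t)) / 2"
        using seg_point_low[where x = x] seg_point_1[where x = y] 3 gromov_1_1 by simp
      show ?thesis
        unfolding eq using abs_half_le[OF IH'[of "2 * t"]] t g by simp
    next
      case 4
      then have "seg_point a x t = seg_point a y t"
        using seg_point_low[where x = x] seg_point_low[where x = y] by simp
      moreover have "t \<le> height a x"
        using t gromov_le_height(1)[of a x y] by simp
      ultimately show ?thesis
        using height_seg_point[of t x] t q unfolding height_def by simp
    next
      case 5
      then have same: "x 0 = y 0"
        using gromov_distinct_letters[of x y a] t by fastforce
      define t' where "t' = (t - 1/2) / clamp_weight a (x 0)"
      have g: "gromov a x y = 1/2 + clamp_weight a (x 0) * gromov a (shift x) (shift y)"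
        using gromov_same_letter[of x y a] same 5 by simp
      have t': "0 \<le> t'" "t' \<le> gromov a (shift x) (shift y)" "t = 1/2 + clamp_weight a (x 0) * t'"
        using rescale_above_half[where t = t and c = "clamp_weight a (x 0)" and h = "gromov a (shift x) (shift y)"]
          5 t g clamp_weight_bounds(1)
        unfolding t'_def by auto
      have eq: "gromov a (seg_point a x t) (seg_point a y t)
          = 1/2 + clamp_weight a (x 0) * gromov a (seg_point a (shift x) t') (seg_point a (shift y) t')"
        using seg_point_high[where x = x] seg_point_high[where x = y] 5 same gromov_same_letter
        unfolding t'_def by simp
      show ?thesis
        unfolding eq using abs_affine_le[OF IH'[OF t'(1,2)] clamp_weight_bounds q] t'(3) by simp
    qed
    then show "?f p \<le> 0 + q / 2"
      by (simp add: p)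
  qed
  from this[of "(x, y, t)"] show ?thesis
    using assms by simp
qed

lemma tree_metric_seg_points_branch:
  "tree_metric a (seg_point a x (gromov a x y)) (seg_point a y (gromov a x y)) = 0"
  unfolding tree_metric_def
  using height_seg_point gromov_seg_points_branch gromov_nonneg gromov_le_height by simp

lemma tree_metric_seg_points_cross:
  assumes s: "gromov a x y \<le> s" "s \<le> height a x" and t: "gromov a x y \<le> t" "t \<le> height a y"
  shows "tree_metric a (seg_point a x s) (seg_point a y t) = s + t - 2 * gromov a x y"
proof -
  let ?g = "gromov a x y" and ?xs = "seg_point a x s" and ?yt = "seg_point a y t"
  have g: "0 \<le> ?g" "?g \<le> height a x" "?g \<le> height a y"
    using gromov_nonneg gromov_le_height by auto
  have "tree_metric a ?xs ?yt
      \<le> tree_metric a ?xs (seg_point a x ?g) + tree_metric a (seg_point a x ?g) (seg_point a y ?g)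
        + tree_metric a (seg_point a y ?g) ?yt"
    using tree_metric_triangle[of a ?xs ?yt "seg_point a x ?g"]
      tree_metric_triangle[of a "seg_point a x ?g" ?yt "seg_point a y ?g"] by simp
  also have "\<dots> = s + t - 2 * ?g"
    using tree_metric_seg_points[of s x ?g] tree_metric_seg_points[of ?g y t] tree_metric_seg_points_branch[of x y]
      s t g by simp
  finally have upper: "tree_metric a ?xs ?yt \<le> s + t - 2 * ?g" .
  have "tree_metric a x y \<le> tree_metric a x ?xs + tree_metric a ?xs ?yt + tree_metric a ?yt y"
    using tree_metric_triangle[of a x y ?xs] tree_metric_triangle[of a ?xs y ?yt] by simp
  moreover have "tree_metric a x ?xs = height a x - s" "tree_metric a ?yt y = height a y - t"
    using tree_metric_seg_point_end[of s x] tree_metric_seg_point_end[of t y] tree_metric_commute[of a x] s t g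
    by simp_all
  ultimately have "s + t - 2 * ?g \<le> tree_metric a ?xs ?yt"
    unfolding tree_metric_def[of a x y] by simp
  with upper show ?thesis by simp
qed

lemma tree_metric_geodesic_path:
  assumes "s \<in> {0..tree_metric a x y}" "t \<in> {0..tree_metric a x y}"
  shows "tree_metric a (geodesic_path a x y s) (geodesic_path a x y t) = \<bar>s - t\<bar>"
proof -
  let ?g = "gromov a x y" and ?hx = "height a x" and ?hy = "height a y"
  have g: "0 \<le> ?g" "?g \<le> ?hx" "?g \<le> ?hy" and d: "tree_metric a x y = ?hx + ?hy - 2 * ?g"
    using gromov_nonneg gromov_le_height by (auto simp: tree_metric_def)
  have cross: "tree_metric a (geodesic_path a x y s) (geodesic_path a x y t) = t - s"
    if "s \<le> ?hx - ?g" "\<not> t \<le> ?hx - ?g" "s \<in> {0..tree_metric a x y}" "t \<in> {0..tree_metric a x y}" for s t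
    using that tree_metric_seg_points_cross[of x y "?hx - s" "t - ?hx + 2 * ?g"] g d
    unfolding geodesic_path_def by auto
  consider "s \<le> ?hx - ?g" "t \<le> ?hx - ?g" | "\<not> s \<le> ?hx - ?g" "\<not> t \<le> ?hx - ?g"
    | "s \<le> ?hx - ?g" "\<not> t \<le> ?hx - ?g" | "\<not> s \<le> ?hx - ?g" "t \<le> ?hx - ?g"
    by blast
  then show ?thesis
  proof cases
    case 1
    then show ?thesis
      using tree_metric_seg_points[of "?hx - s" x "?hx - t"] assms g unfolding geodesic_path_def by auto
  next
    case 2
    then show ?thesis
      using tree_metric_seg_points[of "s - ?hx + 2 * ?g" y "t - ?hx + 2 * ?g"] assms g d
      unfolding geodesic_path_def by auto
  next
    case 3
    then show ?thesis
      using cross assms by simp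
  next
    case 4
    then show ?thesis
      using cross[OF 4(2,1) assms(2,1)] tree_metric_commute[of a "geodesic_path a x y s"] by simp
  qed
qed

lemma tree_metric_geodesic_path_start: "tree_metric a (geodesic_path a x y 0) x = 0"
  using tree_metric_seg_point_end[of "height a x" x] gromov_nonneg[of a x y] height_bounds(1)[of a x]
    gromov_le_height(1)[of a x y]
  unfolding geodesic_path_def by simp

lemma tree_metric_geodesic_path_end: "tree_metric a (geodesic_path a x y (tree_metric a x y)) y = 0"
proof (cases "tree_metric a x y \<le> height a x - gromov a x y")
  case True
  let ?g = "gromov a x y"
  have "height a y = ?g"
    using True gromov_le_height[of a x y] unfolding tree_metric_def by simp
  then have "geodesic_path a x y (tree_metric a x y) = seg_point a x ?g" "tree_metric a (seg_point a y ?g) y = 0"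
    using tree_metric_seg_point_end[of ?g y] gromov_nonneg[of a x y]
    unfolding geodesic_path_def tree_metric_def[of a x y] by simp_all
  then show ?thesis
    using tree_metric_triangle[of a "seg_point a x ?g" y "seg_point a y ?g"] tree_metric_seg_points_branch[of x y]
      tree_metric_nonneg[of a "seg_point a x ?g" y] by simp
next
  case False
  then show ?thesis
    using tree_metric_seg_point_end[of "height a y" y] height_bounds(1)[of a y]
    unfolding geodesic_path_def tree_metric_def[of a x y] by simp
qed

end

section \<open>The quotient space\<close>

context weighted_tree
begin

definition zero_dist :: "((nat \<Rightarrow> nat) \<times> (nat \<Rightarrow> nat)) set" where
  "zero_dist = {(w, u). w \<in> infwords A \<and> u \<in> infwords A \<and> rho A a w u = 0}"

lemma tree_eq_quotient: "tree A a = infwords A // zero_dist"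
  unfolding tree_def zero_dist_def ..

lemma zero_dist_iff: "(w, u) \<in> zero_dist \<longleftrightarrow> w \<in> infwords A \<and> u \<in> infwords A \<and> tree_metric a w u = 0"
  unfolding zero_dist_def using rho_eq_tree_metric by auto

lemma equiv_zero_dist: "equiv (infwords A) zero_dist"
proof (rule equivI)
  show "refl_on (infwords A) zero_dist" "zero_dist \<subseteq> infwords A \<times> infwords A"
    unfolding refl_on_def using zero_dist_iff by auto
  show "sym zero_dist"
  proof (rule symI)
    fix x y
    assume "(x, y) \<in> zero_dist"
    then show "(y, x) \<in> zero_dist"
      using tree_metric_commute[of a x y] by (simp add: zero_dist_iff)
  qed
  show "trans zero_dist"
  proof (rule transI)
    fix x y z
    assume "(x, y) \<in> zero_dist" "(y, z) \<in> zero_dist"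
    then show "(x, z) \<in> zero_dist"
      using tree_metric_triangle[of a x z y] tree_metric_nonneg[of a x z] by (simp add: zero_dist_iff)
  qed
qed

lemma zero_dist_class_eq:
  "x \<in> infwords A \<Longrightarrow> y \<in> infwords A \<Longrightarrow> tree_metric a x y = 0 \<Longrightarrow> zero_dist `` {x} = zero_dist `` {y}"
  by (rule equiv_class_eq[OF equiv_zero_dist]) (simp add: zero_dist_iff)

lemma tdist_classes:
  assumes "x \<in> infwords A" "y \<in> infwords A"
  shows "tdist A a (zero_dist `` {x}) (zero_dist `` {y}) = tree_metric a x y"
proof -
  have rep: "(SOME w. w \<in> zero_dist `` {z}) \<in> infwords A \<and> tree_metric a z (SOME w. w \<in> zero_dist `` {z}) = 0"
    if "z \<in> infwords A" for z
    using someI[of "\<lambda>w. w \<in> zero_dist `` {z}" z] that by (simp add: zero_dist_iff)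
  define x' y' where "x' = (SOME w. w \<in> zero_dist `` {x})" and "y' = (SOME w. w \<in> zero_dist `` {y})"
  have x': "x' \<in> infwords A" "tree_metric a x x' = 0" and y': "y' \<in> infwords A" "tree_metric a y y' = 0"
    using rep[OF assms(1)] rep[OF assms(2)] unfolding x'_def y'_def by auto
  have "tree_metric a x' y' \<le> tree_metric a x' x + tree_metric a x y + tree_metric a y y'"
    using tree_metric_triangle[of a x' y' x] tree_metric_triangle[of a x y' y] by simp
  moreover have "tree_metric a x y \<le> tree_metric a x x' + tree_metric a x' y' + tree_metric a y' y"
    using tree_metric_triangle[of a x y x'] tree_metric_triangle[of a x' y y'] by simp
  ultimately have "tree_metric a x' y' = tree_metric a x y"
    using x' y' tree_metric_commute[of a x' x] tree_metric_commute[of a y' y] by linarith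
  then show ?thesis
    unfolding tdist_def x'_def[symmetric] y'_def[symmetric] using rho_eq_tree_metric x' y' by simp
qed

lemma geodesic_between_classes:
  assumes x: "x \<in> infwords A" and y: "y \<in> infwords A"
  shows "\<exists>\<gamma>. \<gamma> 0 = zero_dist `` {x} \<and> \<gamma> (tree_metric a x y) = zero_dist `` {y} \<and>
    \<gamma> ` {0..tree_metric a x y} \<subseteq> tree A a \<and>
    (\<forall>s\<in>{0..tree_metric a x y}. \<forall>t\<in>{0..tree_metric a x y}. tdist A a (\<gamma> s) (\<gamma> t) = \<bar>s - t\<bar>)"
proof -
  let ?P = "geodesic_path a x y"
  have P: "?P s \<in> infwords A" for s
    by (simp add: geodesic_path_def seg_point_in_infwords x y)
  show ?thesis
  proof (intro exI[of _ "\<lambda>s. zero_dist `` {?P s}"] conjI ballI)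
    show "zero_dist `` {?P 0} = zero_dist `` {x}"
      using zero_dist_class_eq[OF P x] tree_metric_geodesic_path_start[OF weight] by simp
    show "zero_dist `` {?P (tree_metric a x y)} = zero_dist `` {y}"
      using zero_dist_class_eq[OF P y] tree_metric_geodesic_path_end[OF weight] by simp
    show "(\<lambda>s. zero_dist `` {?P s}) ` {0..tree_metric a x y} \<subseteq> tree A a"
      unfolding tree_eq_quotient using P by (auto intro: quotientI)
    fix s t
    assume "s \<in> {0..tree_metric a x y}" "t \<in> {0..tree_metric a x y}"
    then show "tdist A a (zero_dist `` {?P s}) (zero_dist `` {?P t}) = \<bar>s - t\<bar>"
      unfolding tdist_classes[OF P P] by (rule tree_metric_geodesic_path[OF weight])
  qed
qed

end

theorem proposition5p1:
  fixes A :: "nat set" and a :: "nat \<Rightarrow> real"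
  assumes "is_alphabet A" and "is_weight a"
  shows "geodesic_space (tree A a) (tdist A a)"
proof -
  interpret weighted_tree A a
    using assms by unfold_locales
  show ?thesis
    unfolding geodesic_space_def
  proof (intro ballI)
    fix X Y
    assume "X \<in> tree A a" "Y \<in> tree A a"
    then obtain x y where x: "x \<in> infwords A" "X = zero_dist `` {x}" and y: "y \<in> infwords A" "Y = zero_dist `` {y}"
      unfolding tree_eq_quotient by (blast elim: quotientE)
    then have "tdist A a X Y = tree_metric a x y"
      using tdist_classes by simp
    then show "\<exists>\<gamma>. \<gamma> 0 = X \<and> \<gamma> (tdist A a X Y) = Y \<and> \<gamma> ` {0..tdist A a X Y} \<subseteq> tree A a \<and>
        (\<forall>s\<in>{0..tdist A a X Y}. \<forall>t\<in>{0..tdist A a X Y}. tdist A a (\<gamma> s) (\<gamma> t) = \<bar>s - t\<bar>)"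
      using geodesic_between_classes[OF x(1) y(1)] x(2) y(2) by simp
  qed
qed

end
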